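(* Let $\alpha>2$ and $V(x)=|x|^\alpha/\alpha$. There exists a constant $\tilde C_\alpha>0$ depending only on $\alpha$ such that for every integer $n\ge1$, $$\lambda_n(-L)\ \ge\ \tilde C_\alpha\, n^{2(\alpha-1)/\alpha}.$$
   Context: $V(x)=|x|^\alpha/\alpha$, $\mu$ the probability measure with density proportional to $e^{-V}$, $Lf=f''-V'f'$ self-adjoint in $L^2(\mu)$ (unique extension from $C_0^\infty(\mathbb R)$); its spectrum is discrete, and $\lambda_n(-L)$ is the $(n+1)$-th eigenvalue in increasing order ($\lambda_0(-L)=0$), equivalently the max-min value $\sup_{g_0,\dots,g_{n-1}\in L^2(\mu)}\inf_{f\in D(-L)\setminus\{0\},\,f\perp_\mu g_i}\frac{\int f(-Lf)\,d\mu}{\int f^2d\mu}$. *)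

theory Defs
  imports "HOL-Analysis.Analysis"
begin

definition V :: "real \<Rightarrow> real \<Rightarrow> real" where
  "V \<alpha> x = \<bar>x\<bar> powr \<alpha> / \<alpha>"

definition Zc :: "real \<Rightarrow> real" where
  "Zc \<alpha> = integral\<^sup>L lborel (\<lambda>x. exp (- V \<alpha> x))"

definition mu :: "real \<Rightarrow> real measure" where
  "mu \<alpha> = density lborel (\<lambda>x. ennreal (exp (- V \<alpha> x) / Zc \<alpha>))"

definition L2 :: "real \<Rightarrow> (real \<Rightarrow> real) set" where
  "L2 \<alpha> = {g. g \<in> borel_measurable borel \<and> integrable (mu \<alpha>) (\<lambda>x. (g x)^2)}"

text \<open>Graph of the self-adjoint operator L f = f'' - V' f' on its domain D(-L):
  the unique self-adjoint extension from C_0^infinity is the maximal operator, whose domain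
  consists of f in L^2(mu) with f, f' locally absolutely continuous and f'' - V' f' in L^2(mu).\<close>
definition graphL :: "real \<Rightarrow> ((real \<Rightarrow> real) \<times> (real \<Rightarrow> real)) set" where
  "graphL \<alpha> = {(f, h). \<exists>f1 f2.
      (\<forall>x. (f has_real_derivative f1 x) (at x)) \<and>
      f2 \<in> borel_measurable borel \<and>
      (\<forall>a b. a \<le> b \<longrightarrow> f2 absolutely_integrable_on {a..b} \<and>
                       (f2 has_integral (f1 b - f1 a)) {a..b}) \<and>
      (\<forall>x. h x = f2 x - deriv (V \<alpha>) x * f1 x) \<and>
      f \<in> L2 \<alpha> \<and> h \<in> L2 \<alpha>}"

text \<open>lambda_n(-L) via the max-min characterisation (extended reals to avoid junk values).\<close>
definition lambdaL :: "real \<Rightarrow> nat \<Rightarrow> ereal" where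
  "lambdaL \<alpha> n =
     (SUP g \<in> {g :: nat \<Rightarrow> real \<Rightarrow> real. \<forall>i<n. g i \<in> L2 \<alpha>}.
        INF fh \<in> {(f, h). (f, h) \<in> graphL \<alpha> \<and>
                         integral\<^sup>L (mu \<alpha>) (\<lambda>x. (f x)^2) \<noteq> 0 \<and>
                         (\<forall>i<n. integral\<^sup>L (mu \<alpha>) (\<lambda>x. f x * g i x) = 0)}.
          ereal (integral\<^sup>L (mu \<alpha>) (\<lambda>x. fst fh x * (- snd fh x))
                 / integral\<^sup>L (mu \<alpha>) (\<lambda>x. (fst fh x)^2)))"

end

theory Submission
  imports Defs "HOL-Real_Asymp.Real_Asymp"
begin

text \<open>Test against the indicators of the \<open>n\<close> cells of length \<open>2R/n\<close> that partition \<open>[-R, R]\<close>,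
  where \<open>R = (4 \<alpha> n)\<^bsup>1/\<alpha>\<^esup>\<close>. If \<open>f\<close> is orthogonal to them, \<open>f \<rho>\<close> has mean zero on every cell
  (\<open>\<rho> = e\<^bsup>-V\<^esup>\<close>); as \<open>\<rho>\<close> varies by a factor at most \<open>e\<^bsup>8\<alpha>\<^esup>\<close> on a cell, a Poincar\'e inequality on each
  cell gives \<open>\<integral>\<^bsub>[-R,R]\<^esub> f\<^sup>2 \<rho> \<lesssim> (R/n)\<^sup>2 \<integral> f'\<^sup>2 \<rho>\<close>. Outside \<open>[-R, R]\<close> the ground-state potential
  \<open>W = V'\<^sup>2/4 - V''/2 \<gtrsim> R\<^bsup>2\<alpha>-2\<^esup>\<close> controls \<open>f\<^sup>2\<close>, because \<open>\<integral> f\<^sup>2 W \<rho> \<le> \<integral> f'\<^sup>2 \<rho>\<close>. Both scales agree,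
  so \<open>\<integral> f\<^sup>2 \<rho> \<lesssim> R\<^bsup>2-2\<alpha>\<^esup> \<integral> f'\<^sup>2 \<rho> = R\<^bsup>2-2\<alpha>\<^esup> \<integral> f (-L f) \<rho>\<close> with \<open>R\<^bsup>2\<alpha>-2\<^esup> \<approx> n\<^bsup>2(\<alpha>-1)/\<alpha>\<^esup>\<close>; the boundary
  terms of this integration by parts vanish along suitable sequences of endpoints because
  \<open>\<rho>(y + 2) / \<rho>(y)\<^sup>2 \<rightarrow> \<infinity>\<close> for \<open>\<alpha> > 2\<close>. The max-min characterisation then bounds \<open>\<lambda>\<^sub>n\<close> from below.\<close>

section \<open>Elementary real analysis on intervals\<close>

lemma le_of_le_add_epsilon_mult:
  fixes x y C :: real
  assumes "\<And>e. e > 0 \<Longrightarrow> x \<le> y + e * C"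
  shows "x \<le> y"
proof (rule field_le_epsilon)
  fix e :: real assume "e > 0"
  hence "x \<le> y + (e / (\<bar>C\<bar> + 1)) * C" by (intro assms) auto
  also have "(e / (\<bar>C\<bar> + 1)) * C \<le> (e / (\<bar>C\<bar> + 1)) * (\<bar>C\<bar> + 1)"
    using \<open>e > 0\<close> by (intro mult_left_mono) auto
  also have "\<dots> = e" by simp
  finally show "x \<le> y + e" by simp
qed

lemma abs_diff_le_of_local_abs_diff_le:
  fixes H K :: "real \<Rightarrow> real"
  assumes ab: "a \<le> b" and d: "d > 0"
    and local: "\<And>x y. a \<le> x \<Longrightarrow> x \<le> y \<Longrightarrow> y \<le> b \<Longrightarrow> y - x < d \<Longrightarrow> \<bar>H y - H x\<bar> \<le> K y - K x"
  shows "\<bar>H b - H a\<bar> \<le> K b - K a"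
proof -
  obtain N :: nat where N: "real N > (b - a) / d" using reals_Archimedean2 by blast
  hence N0: "N > 0" using ab d by (cases N) (auto simp: field_simps)
  define x where "x k = a + real k * (b - a) / real N" for k
  have x0: "x 0 = a" and xN: "x N = b" using N0 by (auto simp: x_def)
  have step: "x (Suc k) - x k = (b - a) / real N" for k
    using N0 by (simp add: x_def field_simps)
  have "(b - a) / real N < d" using N N0 d by (simp add: field_simps mult.commute)
  moreover have "0 \<le> (b - a) / real N" using ab by simp
  moreover have "a \<le> x k" "x (Suc k) \<le> b" if "k < N" for k
  proof -
    have "real (Suc k) * (b - a) \<le> real N * (b - a)"
      using that ab by (intro mult_right_mono) auto
    moreover have "0 \<le> real k * (b - a)" using ab by simp
    ultimately show "a \<le> x k" "x (Suc k) \<le> b" using N0 by (auto simp: x_def field_simps)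
  qed
  ultimately have "\<bar>H (x (Suc k)) - H (x k)\<bar> \<le> K (x (Suc k)) - K (x k)" if "k < N" for k
    using that step[of k] by (intro local) auto
  hence "\<bar>\<Sum>k<N. H (x (Suc k)) - H (x k)\<bar> \<le> (\<Sum>k<N. K (x (Suc k)) - K (x k))"
    by (intro order_trans[OF sum_abs sum_mono]) auto
  thus ?thesis
    using sum_lessThan_telescope[of "\<lambda>k. H (x k)" N] sum_lessThan_telescope[of "\<lambda>k. K (x k)" N]
    by (simp add: x0 xN)
qed

lemma has_integral_integral_diff:
  fixes f :: "real \<Rightarrow> real"
  assumes "f integrable_on {a..b}" "a \<le> x" "x \<le> y" "y \<le> b"
  shows "(f has_integral (integral {a..y} f - integral {a..x} f)) {x..y}"
proof -
  have "f integrable_on {a..y}" "f integrable_on {x..y}"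
    using assms by (auto intro: integrable_on_subinterval[OF assms(1)])
  thus ?thesis
    using Henstock_Kurzweil_Integration.integral_combine[OF assms(2,3)]
    by (metis add_diff_cancel_left' has_integral_integral)
qed

lemma integral_combine3:
  fixes g :: "real \<Rightarrow> real"
  assumes "continuous_on {a..b} g" "a \<le> p" "p \<le> q" "q \<le> b"
  shows "integral {a..b} g = integral {a..p} g + integral {p..q} g + integral {q..b} g"
proof -
  have "g integrable_on {a..b}" "g integrable_on {p..b}"
    using assms by (auto intro!: integrable_continuous_real intro: continuous_on_subset)
  thus ?thesis
    using Henstock_Kurzweil_Integration.integral_combine[of a p b g]
      Henstock_Kurzweil_Integration.integral_combine[of p q b g] assms by auto
qed

lemma tail_integral_approx:
  fixes g :: "real \<Rightarrow> real"
  assumes "(g has_integral I) UNIV" "e > 0"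
  obtains T where "T > 0" "\<And>a b. a \<le> -T \<Longrightarrow> T \<le> b \<Longrightarrow> \<bar>integral {a..b} g - I\<bar> < e"
proof -
  from assms obtain B where B: "B > 0" "\<And>a b. ball 0 B \<subseteq> cbox a b \<Longrightarrow> norm (integral (cbox a b) g - I) < e"
    unfolding has_integral_alt'[of g I UNIV] by auto
  have "ball 0 B \<subseteq> cbox a b" if "a \<le> -B" "B \<le> b" for a b :: real
    using that by (auto simp: dist_real_def)
  thus ?thesis using that[of B] B by auto
qed

lemma nonneg_has_integral_UNIV_tails:
  fixes g :: "real \<Rightarrow> real"
  assumes gi: "(g has_integral I) UNIV" and gn: "\<And>x. g x \<ge> 0"
  shows "\<And>x y. g integrable_on {x..y}"
    and "\<And>x y. integral {x..y} g \<le> I"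
    and "\<And>\<delta>. \<delta> > 0 \<Longrightarrow> \<exists>X. \<forall>x y. X \<le> x \<longrightarrow> x \<le> y \<longrightarrow> integral {x..y} g \<le> \<delta>"
proof -
  have gU: "g integrable_on UNIV" using gi by blast
  show gs: "g integrable_on {x..y}" for x y by (rule integrable_on_subinterval[OF gU]) auto
  show "integral {x..y} g \<le> I" for x y
    using integral_subset_le[of "{x..y}" UNIV g, OF _ gs gU] gn integral_unique[OF gi] by auto
  fix \<delta> :: real assume "\<delta> > 0"
  then obtain T where T: "T > 0" "\<And>a b. a \<le> -T \<Longrightarrow> T \<le> b \<Longrightarrow> \<bar>integral {a..b} g - I\<bar> < \<delta> / 2"
    using tail_integral_approx[OF gi, of "\<delta> / 2"] by auto
  have "integral {x..y} g \<le> \<delta>" if "T \<le> x" "x \<le> y" for x y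
  proof -
    have "integral {-T..x} g + integral {x..y} g = integral {-T..y} g"
      using that T(1) gs by (intro Henstock_Kurzweil_Integration.integral_combine) auto
    moreover have "\<bar>integral {-T..x} g - I\<bar> < \<delta> / 2" "\<bar>integral {-T..y} g - I\<bar> < \<delta> / 2"
      using T(2)[of "-T" x] T(2)[of "-T" y] that by auto
    ultimately show ?thesis by linarith
  qed
  thus "\<exists>X. \<forall>x y. X \<le> x \<longrightarrow> x \<le> y \<longrightarrow> integral {x..y} g \<le> \<delta>" by blast
qed

lemma nonneg_has_integral_reflect_UNIV:
  fixes g :: "real \<Rightarrow> real"
  assumes "(g has_integral I) UNIV" "\<And>x. g x \<ge> 0"
  shows "((\<lambda>x. g (- x)) has_integral I) UNIV"
proof -
  have "g absolutely_integrable_on UNIV"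
    using assms by (intro nonnegative_absolutely_integrable_1) auto
  thus ?thesis
    using has_absolute_integral_reflect_real[of UNIV UNIV g I] integral_unique[OF assms(1)]
    by (auto simp: absolutely_integrable_on_def has_integral_integrable_integral)
qed

lemma continuous_on_UNIV_of_Icc:
  fixes F :: "real \<Rightarrow> real"
  assumes "\<And>a b. a \<le> b \<Longrightarrow> continuous_on {a..b} F"
  shows "continuous_on UNIV F"
proof -
  have "isCont F x" for x
    using continuous_on_interior[OF assms[of "x - 1" "x + 1"], of x] by auto
  thus ?thesis by (simp add: continuous_at_imp_continuous_on)
qed

lemma continuous_on_of_has_integral_increments:
  fixes g \<psi> :: "real \<Rightarrow> real"
  assumes "g integrable_on {a..b}" and "\<And>x. x \<in> {a..b} \<Longrightarrow> (g has_integral (\<psi> x - \<psi> a)) {a..x}"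
  shows "continuous_on {a..b} \<psi>"
proof -
  have "continuous_on {a..b} (\<lambda>x. \<psi> a + integral {a..x} g)"
    by (intro continuous_intros indefinite_integral_continuous_1 assms(1))
  moreover have "\<psi> x = \<psi> a + integral {a..x} g" if "x \<in> {a..b}" for x
    using assms(2)[OF that] by (auto dest: integral_unique)
  ultimately show ?thesis by (metis (no_types, lifting) continuous_on_cong)
qed

lemma abs_product_increment_le:
  fixes \<phi> \<phi>' \<psi> g :: "real \<Rightarrow> real"
  assumes xy: "x \<le> y"
    and d\<phi>: "\<And>t. t \<in> {x..y} \<Longrightarrow> (\<phi> has_real_derivative \<phi>' t) (at t)"
    and g: "(g has_integral (\<psi> y - \<psi> x)) {x..y}" and abs_g: "((\<lambda>t. \<bar>g t\<bar>) has_integral J) {x..y}"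
    and I: "((\<lambda>t. \<phi> t * g t + \<phi>' t * \<psi> t) has_integral I) {x..y}"
    and osc: "\<And>t. t \<in> {x..y} \<Longrightarrow> \<bar>\<phi> y - \<phi> t\<bar> \<le> e \<and> \<bar>\<psi> x - \<psi> t\<bar> \<le> e"
    and M: "\<And>t. t \<in> {x..y} \<Longrightarrow> \<bar>\<phi>' t\<bar> \<le> M"
  shows "\<bar>\<phi> y * \<psi> y - \<phi> x * \<psi> x - I\<bar> \<le> e * J + e * M * (y - x)"
proof -
  have "(\<phi>' has_integral (\<phi> y - \<phi> x)) {x..y}"
    using xy d\<phi> by (intro fundamental_theorem_of_calculus)
      (auto simp: has_real_derivative_iff_has_vector_derivative[symmetric] intro: has_field_derivative_at_within)
  from has_integral_diff[OF has_integral_add[OF has_integral_mult_right[OF g, of "\<phi> y"]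
      has_integral_mult_right[OF this, of "\<psi> x"]] I]
  have incr: "((\<lambda>t. (\<phi> y - \<phi> t) * g t + (\<psi> x - \<psi> t) * \<phi>' t) has_integral
                (\<phi> y * \<psi> y - \<phi> x * \<psi> x - I)) {x..y}"
    by (simp add: algebra_simps)
  have bound: "((\<lambda>t. e * \<bar>g t\<bar> + e * M) has_integral (e * J + e * M * (y - x))) {x..y}"
    using has_integral_add[OF has_integral_mult_right[OF abs_g, of e] has_integral_const_real[of "e * M" x y]] xy
    by (simp add: algebra_simps)
  have "\<bar>(\<phi> y - \<phi> t) * g t + (\<psi> x - \<psi> t) * \<phi>' t\<bar> \<le> e * \<bar>g t\<bar> + e * M" if t: "t \<in> {x..y}" for t
  proof -
    have "\<bar>(\<phi> y - \<phi> t) * g t\<bar> \<le> e * \<bar>g t\<bar>" "\<bar>(\<psi> x - \<psi> t) * \<phi>' t\<bar> \<le> e * M"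
      using osc[OF t] M[OF t] by (auto simp: abs_mult intro: mult_mono)
    thus ?thesis by linarith
  qed
  thus ?thesis
    using integral_norm_bound_integral[OF has_integral_integrable[OF incr] has_integral_integrable[OF bound]]
    by (simp add: integral_unique[OF incr] integral_unique[OF bound])
qed

text \<open>Integration by parts against the indefinite integral \<open>\<psi>\<close> of an absolutely integrable \<open>g\<close>, which
  need not be differentiable: the defect \<open>\<phi> \<psi> - \<integral>(\<phi> g + \<phi>' \<psi>)\<close> has increments \<open>o(y - x)\<close>
  uniformly, by uniform continuity of \<open>\<phi>\<close> and \<open>\<psi>\<close>.\<close>

lemma integration_by_parts_indefinite_integral:
  fixes \<phi> \<phi>' \<psi> g :: "real \<Rightarrow> real"
  assumes ab: "a \<le> b"
    and d\<phi>: "\<And>x. x \<in> {a..b} \<Longrightarrow> (\<phi> has_real_derivative \<phi>' x) (at x)"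
    and c\<phi>': "continuous_on {a..b} \<phi>'"
    and g: "g absolutely_integrable_on {a..b}"
    and \<psi>: "\<And>x y. a \<le> x \<Longrightarrow> x \<le> y \<Longrightarrow> y \<le> b \<Longrightarrow> (g has_integral (\<psi> y - \<psi> x)) {x..y}"
  shows "((\<lambda>x. \<phi> x * g x + \<phi>' x * \<psi> x) has_integral (\<phi> b * \<psi> b - \<phi> a * \<psi> a)) {a..b}"
proof -
  have c\<phi>: "continuous_on {a..b} \<phi>" by (rule has_real_derivative_imp_continuous_on[OF d\<phi>])
  have gi: "g integrable_on {a..b}" and agi: "(\<lambda>t. \<bar>g t\<bar>) integrable_on {a..b}"
    using g by (auto simp: absolutely_integrable_on_def)
  have c\<psi>: "continuous_on {a..b} \<psi>"
    using gi \<psi> by (intro continuous_on_of_has_integral_increments) auto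
  have "(\<lambda>x. \<phi> x * g x) integrable_on {a..b}"
    using absolutely_integrable_bounded_measurable_product_real[OF
        continuous_imp_measurable_on_sets_lebesgue[OF c\<phi>] _ _ g]
      compact_imp_bounded[OF compact_continuous_image[OF c\<phi>]]
    by (simp add: absolutely_integrable_on_def)
  moreover have "(\<lambda>x. \<phi>' x * \<psi> x) integrable_on {a..b}"
    by (intro integrable_continuous_real continuous_intros c\<phi>' c\<psi>)
  ultimately have i: "(\<lambda>x. \<phi> x * g x + \<phi>' x * \<psi> x) integrable_on {a..b}"
    by (rule integrable_add)
  obtain M where M: "\<And>x. x \<in> {a..b} \<Longrightarrow> \<bar>\<phi>' x\<bar> \<le> M"
    using compact_imp_bounded[OF compact_continuous_image[OF c\<phi>' compact_Icc]]
    unfolding bounded_iff by (metis atLeastAtMost_iff imageI real_norm_def)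
  define D where "D x = \<phi> x * \<psi> x - integral {a..x} (\<lambda>t. \<phi> t * g t + \<phi>' t * \<psi> t)" for x
  define G where "G x = integral {a..x} (\<lambda>t. \<bar>g t\<bar>)" for x
  have "\<bar>D b - D a\<bar> \<le> 0 + e * ((G b - G a) + M * (b - a))" if e: "e > 0" for e
  proof -
    obtain \<delta>\<phi> where \<delta>\<phi>: "\<delta>\<phi> > 0" "\<And>x x'. x \<in> {a..b} \<Longrightarrow> x' \<in> {a..b} \<Longrightarrow> dist x' x < \<delta>\<phi> \<Longrightarrow> dist (\<phi> x') (\<phi> x) < e"
      using compact_uniformly_continuous[OF c\<phi> compact_Icc] e
      unfolding uniformly_continuous_on_def by metis
    obtain \<delta>\<psi> where \<delta>\<psi>: "\<delta>\<psi> > 0" "\<And>x x'. x \<in> {a..b} \<Longrightarrow> x' \<in> {a..b} \<Longrightarrow> dist x' x < \<delta>\<psi> \<Longrightarrow> dist (\<psi> x') (\<psi> x) < e"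
      using compact_uniformly_continuous[OF c\<psi> compact_Icc] e
      unfolding uniformly_continuous_on_def by metis
    have local: "\<bar>D y - D x\<bar> \<le> (e * G y + e * M * y) - (e * G x + e * M * x)"
      if xy: "a \<le> x" "x \<le> y" "y \<le> b" "y - x < min \<delta>\<phi> \<delta>\<psi>" for x y
    proof -
      have osc: "\<bar>\<phi> y - \<phi> t\<bar> \<le> e \<and> \<bar>\<psi> x - \<psi> t\<bar> \<le> e" if "t \<in> {x..y}" for t
        using \<delta>\<phi>(2)[of t y] \<delta>\<psi>(2)[of t x] that xy by (auto simp: dist_real_def abs_minus_commute)
      have "\<bar>\<phi> y * \<psi> y - \<phi> x * \<psi> x - (integral {a..y} (\<lambda>t. \<phi> t * g t + \<phi>' t * \<psi> t)
                - integral {a..x} (\<lambda>t. \<phi> t * g t + \<phi>' t * \<psi> t))\<bar> \<le> e * (G y - G x) + e * M * (y - x)"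
        unfolding G_def
        by (rule abs_product_increment_le[OF xy(2) _ \<psi>[OF xy(1-3)] has_integral_integral_diff[OF agi xy(1-3)]
              has_integral_integral_diff[OF i xy(1-3)] osc]) (use d\<phi> M xy in auto)
      thus ?thesis by (simp add: D_def algebra_simps)
    qed
    have "\<bar>D b - D a\<bar> \<le> (e * G b + e * M * b) - (e * G a + e * M * a)"
      by (rule abs_diff_le_of_local_abs_diff_le[where d="min \<delta>\<phi> \<delta>\<psi>", OF ab _ local]) (use \<delta>\<phi> \<delta>\<psi> in simp)
    thus ?thesis by (simp add: algebra_simps)
  qed
  hence "D b = D a" using le_of_le_add_epsilon_mult[of "\<bar>D b - D a\<bar>" 0] by force
  hence "integral {a..b} (\<lambda>x. \<phi> x * g x + \<phi>' x * \<psi> x) = \<phi> b * \<psi> b - \<phi> a * \<psi> a"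
    by (simp add: D_def)
  thus ?thesis using i by (metis has_integral_integral)
qed

lemma has_real_derivative_zero_of_abs_le_powr:
  fixes p :: "real \<Rightarrow> real"
  assumes b: "\<beta> > 1" and p0: "p 0 = 0" and pb: "\<And>y. \<bar>p y\<bar> \<le> \<bar>y\<bar> powr \<beta>"
  shows "(p has_real_derivative 0) (at 0)"
proof -
  have lim: "((\<lambda>y. \<bar>y\<bar> powr (\<beta> - 1)) \<longlongrightarrow> 0) (at (0::real))"
    by (rule tendsto_zero_powrI) (use b in \<open>auto intro!: tendsto_eq_intros\<close>)
  have "((\<lambda>y. (p y - p 0) / (y - 0)) \<longlongrightarrow> 0) (at 0)"
  proof (rule Lim_null_comparison[OF _ lim])
    show "\<forall>\<^sub>F y in at 0. norm ((p y - p 0) / (y - 0)) \<le> \<bar>y\<bar> powr (\<beta> - 1)"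
    proof (rule eventually_at_topological[THEN iffD2], intro exI[of _ UNIV] conjI ballI impI, simp, simp)
      fix y :: real assume "y \<noteq> 0"
      hence "\<bar>p y\<bar> / \<bar>y\<bar> \<le> \<bar>y\<bar> powr \<beta> / \<bar>y\<bar>" using pb[of y] by (simp add: divide_right_mono)
      also have "\<dots> = \<bar>y\<bar> powr (\<beta> - 1)" using \<open>y \<noteq> 0\<close> by (simp add: powr_diff)
      finally show "norm ((p y - p 0) / (y - 0)) \<le> \<bar>y\<bar> powr (\<beta> - 1)" using p0 by (simp add: abs_divide)
    qed
  qed
  thus ?thesis by (simp add: has_field_derivative_iff)
qed

lemma has_real_derivative_abs_powr:
  fixes \<beta> x :: real
  assumes b: "\<beta> > 1"
  shows "((\<lambda>y. \<bar>y\<bar> powr \<beta>) has_real_derivative (\<beta> * sgn x * \<bar>x\<bar> powr (\<beta> - 1))) (at x)"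
proof (cases "x = 0")
  case True
  thus ?thesis using has_real_derivative_zero_of_abs_le_powr[OF b, of "\<lambda>y. \<bar>y\<bar> powr \<beta>"] by simp
next
  case False
  show ?thesis
  proof (cases "x > 0")
    case True
    have "((\<lambda>y. y powr \<beta>) has_real_derivative (\<beta> * x powr (\<beta> - 1))) (at x)"
      using has_real_derivative_powr[OF True] .
    hence "((\<lambda>y. y powr \<beta>) has_real_derivative (\<beta> * sgn x * \<bar>x\<bar> powr (\<beta> - 1))) (at x)" using True by simp
    thus ?thesis
      by (rule has_field_derivative_transform_within_open[of _ _ _ "{0<..}"]) (use True in auto)
  next
    case False
    hence xn: "x < 0" using \<open>x \<noteq> 0\<close> by simp
    have "((\<lambda>y. (- y) powr \<beta>) has_real_derivative (\<beta> * (-x) powr (\<beta> - 1) * (-1))) (at x)"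
      using xn by (auto intro!: derivative_eq_intros)
    hence "((\<lambda>y. (- y) powr \<beta>) has_real_derivative (\<beta> * sgn x * \<bar>x\<bar> powr (\<beta> - 1))) (at x)"
      using xn by simp
    thus ?thesis
      by (rule has_field_derivative_transform_within_open[of _ _ _ "{..<0}"]) (use xn in auto)
  qed
qed

lemma has_real_derivative_sgn_mult_abs_powr:
  fixes \<beta> x :: real
  assumes b: "\<beta> > 1"
  shows "((\<lambda>y. sgn y * \<bar>y\<bar> powr \<beta>) has_real_derivative (\<beta> * \<bar>x\<bar> powr (\<beta> - 1))) (at x)"
proof (cases "x = 0")
  case True
  thus ?thesis using has_real_derivative_zero_of_abs_le_powr[OF b, of "\<lambda>y. sgn y * \<bar>y\<bar> powr \<beta>"] b
    by (simp add: abs_mult abs_sgn_eq)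
next
  case False
  show ?thesis
  proof (cases "x > 0")
    case True
    have "((\<lambda>y. y powr \<beta>) has_real_derivative (\<beta> * x powr (\<beta> - 1))) (at x)"
      using has_real_derivative_powr[OF True] .
    hence "((\<lambda>y. y powr \<beta>) has_real_derivative (\<beta> * \<bar>x\<bar> powr (\<beta> - 1))) (at x)" using True by simp
    thus ?thesis
      by (rule has_field_derivative_transform_within_open[of _ _ _ "{0<..}"]) (use True in auto)
  next
    case False
    hence xn: "x < 0" using \<open>x \<noteq> 0\<close> by simp
    have "((\<lambda>y. - ((- y) powr \<beta>)) has_real_derivative - (\<beta> * (-x) powr (\<beta> - 1) * (-1))) (at x)"
      using xn by (auto intro!: derivative_eq_intros)
    hence "((\<lambda>y. - ((- y) powr \<beta>)) has_real_derivative (\<beta> * \<bar>x\<bar> powr (\<beta> - 1))) (at x)"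
      using xn by simp
    thus ?thesis
      by (rule has_field_derivative_transform_within_open[of _ _ _ "{..<0}"]) (use xn in auto)
  qed
qed

section \<open>The potential\<close>

definition dV :: "real \<Rightarrow> real \<Rightarrow> real" where "dV a x = sgn x * \<bar>x\<bar> powr (a - 1)"
definition ddV :: "real \<Rightarrow> real \<Rightarrow> real" where "ddV a x = (a - 1) * \<bar>x\<bar> powr (a - 2)"
definition rho :: "real \<Rightarrow> real \<Rightarrow> real" where "rho a x = exp (- V a x)"

lemma V_has_real_derivative: "a > 1 \<Longrightarrow> (V a has_real_derivative dV a x) (at x)"
proof -
  assume a: "a > 1"
  have "((\<lambda>y. \<bar>y\<bar> powr a / a) has_real_derivative (a * sgn x * \<bar>x\<bar> powr (a - 1)) / a) (at x)"
    by (intro DERIV_cdivide has_real_derivative_abs_powr a)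
  moreover have "V a = (\<lambda>y. \<bar>y\<bar> powr a / a)" by (simp add: fun_eq_iff V_def)
  ultimately show ?thesis using a by (simp add: dV_def)
qed

lemma deriv_V: "a > 1 \<Longrightarrow> deriv (V a) x = dV a x"
  by (rule DERIV_imp_deriv[OF V_has_real_derivative])

lemma dV_has_real_derivative: "a > 2 \<Longrightarrow> (dV a has_real_derivative ddV a x) (at x)"
proof -
  assume a: "a > 2"
  have "((\<lambda>y. sgn y * \<bar>y\<bar> powr (a - 1)) has_real_derivative ((a - 1) * \<bar>x\<bar> powr (a - 1 - 1))) (at x)"
    by (rule has_real_derivative_sgn_mult_abs_powr) (use a in simp)
  thus ?thesis by (simp add: dV_def[abs_def] ddV_def)
qed

lemma rho_has_real_derivative: "a > 1 \<Longrightarrow> (rho a has_real_derivative (- dV a x * rho a x)) (at x)"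
proof -
  assume a: "a > 1"
  have "((\<lambda>y. exp (- V a y)) has_real_derivative (exp (- V a x) * (- dV a x))) (at x)"
    by (intro DERIV_chain2[OF DERIV_exp] DERIV_minus V_has_real_derivative a)
  thus ?thesis by (simp add: rho_def[abs_def] mult.commute)
qed

lemma V_nonneg: "a > 0 \<Longrightarrow> V a x \<ge> 0" by (simp add: V_def)
lemma rho_pos: "rho a x > 0" by (simp add: rho_def)
lemma rho_minus: "rho a (- x) = rho a x" by (simp add: rho_def V_def)
lemma V_mono_abs: "a > 0 \<Longrightarrow> \<bar>x\<bar> \<le> \<bar>y\<bar> \<Longrightarrow> V a x \<le> V a y"
  by (simp add: V_def divide_right_mono powr_mono2)
lemma rho_antimono_abs: "a > 0 \<Longrightarrow> \<bar>x\<bar> \<le> \<bar>y\<bar> \<Longrightarrow> rho a y \<le> rho a x"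
  using V_mono_abs[of a x y] by (simp add: rho_def)

lemma continuous_on_rho: "a > 1 \<Longrightarrow> continuous_on S (rho a)"
  by (meson DERIV_isCont rho_has_real_derivative continuous_at_imp_continuous_on)
lemma continuous_on_dV: "a > 2 \<Longrightarrow> continuous_on S (dV a)"
  by (meson DERIV_isCont dV_has_real_derivative continuous_at_imp_continuous_on)
lemma continuous_on_ddV: "a > 2 \<Longrightarrow> continuous_on S (ddV a)"
proof -
  assume a: "a > 2"
  have ic: "isCont (\<lambda>x. \<bar>x\<bar> powr (a - 2)) x" for x :: real
    unfolding isCont_def by (rule tendsto_eq_intros) (use a in \<open>auto intro!: tendsto_eq_intros\<close>)
  have "isCont (ddV a) x" for x unfolding ddV_def by (rule continuous_mult[OF continuous_const ic])
  thus ?thesis by (simp add: continuous_at_imp_continuous_on)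
qed

lemma abs_dV: "\<bar>dV a x\<bar> = \<bar>x\<bar> powr (a - 1)"
  by (cases "x = 0") (auto simp: dV_def abs_mult)
lemma dV_power2: "(dV a x)^2 = \<bar>x\<bar> powr (2 * a - 2)"
proof -
  have "(dV a x)^2 = \<bar>dV a x\<bar>^2" by simp
  also have "\<dots> = (\<bar>x\<bar> powr (a - 1))^2" by (simp add: abs_dV)
  also have "\<dots> = \<bar>x\<bar> powr (2 * a - 2)"
    by (simp add: power2_eq_square powr_add[symmetric])
  finally show ?thesis .
qed
lemma dV_sign: "x \<ge> 0 \<Longrightarrow> dV a x \<ge> 0" "x \<le> 0 \<Longrightarrow> dV a x \<le> 0"
  by (auto simp: dV_def sgn_if)

definition W :: "real \<Rightarrow> real \<Rightarrow> real" where "W a t = (dV a t)^2 / 4 - ddV a t / 2"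

lemma continuous_on_W: "a > 2 \<Longrightarrow> continuous_on S (W a)"
  unfolding W_def[abs_def] by (intro continuous_intros continuous_on_dV continuous_on_ddV) auto

text \<open>The ground-state substitution \<open>f = g e\<^bsup>V/2\<^esup>\<close>: with \<open>W = V'\<^sup>2/4 - V''/2\<close>,
  \<open>f'\<^sup>2 \<rho> = f\<^sup>2 W \<rho> + (f' - f V'/2)\<^sup>2 \<rho> + (f\<^sup>2 V' \<rho>)'/2\<close>.\<close>

lemma has_real_derivative_ground_state_flux:
  fixes f f' :: "real \<Rightarrow> real"
  assumes a2: "\<alpha> > 2" and df: "\<And>x. (f has_real_derivative f' x) (at x)"
  shows "((\<lambda>t. f t^2 * dV \<alpha> t * rho \<alpha> t) has_real_derivative
           2 * (f' t^2 * rho \<alpha> t - f t^2 * W \<alpha> t * rho \<alpha> t - (f' t - f t * dV \<alpha> t / 2)^2 * rho \<alpha> t)) (at t)"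
proof -
  have a1: "\<alpha> > 1" using a2 by simp
  have "((\<lambda>t. f t * f t * dV \<alpha> t * rho \<alpha> t) has_real_derivative
          2 * (f' t^2 * rho \<alpha> t - f t^2 * W \<alpha> t * rho \<alpha> t - (f' t - f t * dV \<alpha> t / 2)^2 * rho \<alpha> t)) (at t)"
    by (rule DERIV_cong[OF DERIV_mult[OF DERIV_mult[OF DERIV_mult[OF df df] dV_has_real_derivative[OF a2]]
          rho_has_real_derivative[OF a1]]]) (simp add: W_def power2_eq_square field_simps)
  thus ?thesis by (simp add: power2_eq_square)
qed

lemma ground_state_inequality:
  fixes f f' :: "real \<Rightarrow> real"
  assumes a2: "\<alpha> > 2" and df: "\<And>x. (f has_real_derivative f' x) (at x)"
    and cf': "continuous_on UNIV f'" and ab: "a \<le> 0" "0 \<le> b"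
  shows "integral {a..b} (\<lambda>t. f t^2 * W \<alpha> t * rho \<alpha> t) \<le> integral {a..b} (\<lambda>t. f' t^2 * rho \<alpha> t)"
proof -
  have cont: "continuous_on S f" "continuous_on S f'" for S
    using has_real_derivative_imp_continuous_on[OF df] continuous_on_subset[OF cf'] by auto
  have a1: "\<alpha> > 1" using a2 by simp
  note cont = cont continuous_on_rho[OF a1] continuous_on_dV[OF a2] continuous_on_W[OF a2]
  define P where "P t = f t^2 * dV \<alpha> t * rho \<alpha> t" for t
  define S where "S t = (f' t - f t * dV \<alpha> t / 2)^2 * rho \<alpha> t" for t
  have "((\<lambda>t. 2 * (f' t^2 * rho \<alpha> t - f t^2 * W \<alpha> t * rho \<alpha> t - S t)) has_integral (P b - P a)) {a..b}"
    using ab has_real_derivative_ground_state_flux[OF a2 df] unfolding P_def S_def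
    by (intro fundamental_theorem_of_calculus)
       (auto simp: has_real_derivative_iff_has_vector_derivative[symmetric] intro: has_field_derivative_at_within)
  hence "P b - P a = integral {a..b} (\<lambda>t. 2 * (f' t^2 * rho \<alpha> t - f t^2 * W \<alpha> t * rho \<alpha> t - S t))"
    by (rule integral_unique[symmetric])
  also have "\<dots> = 2 * (integral {a..b} (\<lambda>t. f' t^2 * rho \<alpha> t) - integral {a..b} (\<lambda>t. f t^2 * W \<alpha> t * rho \<alpha> t)
                        - integral {a..b} S)"
    unfolding S_def by (simp add: integral_diff integrable_diff integrable_continuous_real continuous_intros cont)
  finally have "integral {a..b} (\<lambda>t. f t^2 * W \<alpha> t * rho \<alpha> t)
      = integral {a..b} (\<lambda>t. f' t^2 * rho \<alpha> t) - integral {a..b} S - (P b - P a) / 2" by (simp add: field_simps)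
  moreover have "P a \<le> 0" unfolding P_def using dV_sign(2)[OF ab(1)] rho_pos[of \<alpha> a]
    by (simp add: mult_nonneg_nonpos mult_nonpos_nonneg)
  moreover have "P b \<ge> 0" unfolding P_def using dV_sign(1)[OF ab(2)] rho_pos[of \<alpha> b] by simp
  moreover have "S t \<ge> 0" for t using rho_pos[of \<alpha> t] by (simp add: S_def)
  hence "integral {a..b} S \<ge> 0"
    unfolding S_def by (intro integral_nonneg) (auto intro!: integrable_continuous_real continuous_intros cont)
  ultimately show ?thesis by simp
qed

lemma V_diff_le:
  assumes a1: "\<alpha> > 1" and s: "\<bar>s\<bar> \<le> R" and t: "\<bar>t\<bar> \<le> R"
  shows "V \<alpha> t - V \<alpha> s \<le> R powr (\<alpha> - 1) * \<bar>t - s\<bar>"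
proof -
  have *: "\<bar>V \<alpha> y - V \<alpha> x\<bar> \<le> R powr (\<alpha> - 1) * (y - x)" if xy: "x < y" "\<bar>x\<bar> \<le> R" "\<bar>y\<bar> \<le> R" for x y
  proof -
    obtain z where z: "x < z" "z < y" "V \<alpha> y - V \<alpha> x = (y - x) * dV \<alpha> z"
      using MVT2[OF xy(1), of "V \<alpha>" "dV \<alpha>"] V_has_real_derivative[OF a1] by blast
    have "\<bar>dV \<alpha> z\<bar> \<le> R powr (\<alpha> - 1)" unfolding abs_dV using a1 z xy by (intro powr_mono2) auto
    thus ?thesis using z xy by (simp add: abs_mult mult.commute mult_left_mono)
  qed
  show ?thesis
    using *[of s t] *[of t s] s t by (cases s t rule: linorder_cases) (auto simp: abs_minus_commute)
qed

lemma rho_le_exp_mult_rho: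
  assumes "\<alpha> > 1" "\<bar>s\<bar> \<le> R" "\<bar>t\<bar> \<le> R"
  shows "rho \<alpha> s \<le> exp (R powr (\<alpha> - 1) * \<bar>s - t\<bar>) * rho \<alpha> t"
  using V_diff_le[OF assms] by (simp add: rho_def abs_minus_commute flip: exp_add)

lemma W_eq: "W \<alpha> t = \<bar>t\<bar> powr (2 * \<alpha> - 2) / 4 - (\<alpha> - 1) * \<bar>t\<bar> powr (\<alpha> - 2) / 2"
  by (simp add: W_def dV_power2 ddV_def)

lemma W_ge_inside:
  assumes "\<alpha> > 2" "\<bar>t\<bar> \<le> R"
  shows "W \<alpha> t \<ge> - ((\<alpha> - 1) * R powr (\<alpha> - 2) / 2)"
proof -
  have "(\<alpha> - 1) * \<bar>t\<bar> powr (\<alpha> - 2) / 2 \<le> (\<alpha> - 1) * R powr (\<alpha> - 2) / 2"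
    using assms by (simp add: powr_mono2)
  moreover have "0 \<le> \<bar>t\<bar> powr (2 * \<alpha> - 2) / 4" by simp
  ultimately show ?thesis unfolding W_eq by linarith
qed

lemma W_ge_outside:
  assumes a2: "\<alpha> > 2" and R: "R > 0" "4 * (\<alpha> - 1) \<le> R powr \<alpha>" and t: "R \<le> \<bar>t\<bar>"
  shows "W \<alpha> t \<ge> R powr (2 * \<alpha> - 2) / 8"
proof -
  have "4 * (\<alpha> - 1) \<le> \<bar>t\<bar> powr \<alpha>" using R t a2 powr_mono2[of \<alpha> R "\<bar>t\<bar>"] by linarith
  hence "\<bar>t\<bar> powr (\<alpha> - 2) * ((\<alpha> - 1) / 2) \<le> \<bar>t\<bar> powr (\<alpha> - 2) * (\<bar>t\<bar> powr \<alpha> / 8)"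
    by (intro mult_left_mono) auto
  hence "(\<alpha> - 1) * \<bar>t\<bar> powr (\<alpha> - 2) / 2 \<le> \<bar>t\<bar> powr (\<alpha> - 2) * (\<bar>t\<bar> powr \<alpha> / 8)"
    by (simp add: mult_ac)
  also have "\<dots> = \<bar>t\<bar> powr (2 * \<alpha> - 2) / 8" using R t by (simp add: powr_add[symmetric])
  finally have "W \<alpha> t \<ge> \<bar>t\<bar> powr (2 * \<alpha> - 2) / 8" unfolding W_eq by simp
  moreover have "R powr (2 * \<alpha> - 2) \<le> \<bar>t\<bar> powr (2 * \<alpha> - 2)" using R t a2 by (intro powr_mono2) auto
  ultimately show ?thesis by simp
qed

section \<open>Weighted Poincar\'e inequalities on intervals\<close>

lemma exists_zero_of_weighted_integral_eq_0:
  fixes f r :: "real \<Rightarrow> real"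
  assumes cf: "continuous_on {c..d} f" and cr: "continuous_on {c..d} r" and cd: "c < d"
    and rpos: "\<And>t. t \<in> {c..d} \<Longrightarrow> r t > 0"
    and zero: "((\<lambda>t. f t * r t) has_integral 0) {c..d}"
  shows "\<exists>x\<in>{c..d}. f x = 0"
proof (rule ccontr)
  assume nz: "\<not> ?thesis"
  have same_sign: "f c * f t > 0" if t: "t \<in> {c..d}" for t
  proof (rule ccontr)
    assume "\<not> f c * f t > 0"
    hence "f c \<le> 0 \<and> 0 \<le> f t \<or> f t \<le> 0 \<and> 0 \<le> f c" by (auto simp: not_less mult_le_0_iff)
    then obtain x where "c \<le> x" "x \<le> t" "f x = 0"
      using IVT'[of f c 0 t] IVT2'[of f t 0 c] t continuous_on_subset[OF cf, of "{c..t}"] by auto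
    thus False using nz t by auto
  qed
  have "f c * (f d * r d) = 0"
    using has_integral_mult_right[OF zero, of "f c"] same_sign rpos cd
    by (intro has_integral_0_cbox_imp_0[of c d "\<lambda>t. f c * (f t * r t)"])
       (auto intro!: continuous_intros cf cr simp: mult.assoc[symmetric] less_imp_le)
  moreover have "0 < f c * f d" "0 < r d" using same_sign[of d] rpos[of d] cd by auto
  hence "0 < (f c * f d) * r d" by (rule mult_pos_pos)
  ultimately show False by (simp only: mult.assoc)
qed

lemma abs_diff_power2_le_integral:
  fixes f f' :: "real \<Rightarrow> real"
  assumes df: "\<And>x. (f has_real_derivative f' x) (at x)" and cf': "continuous_on UNIV f'"
    and st: "c \<le> s" "s \<le> t" "t \<le> d"
  shows "\<bar>f t ^ 2 - f s ^ 2\<bar> \<le> integral {c..d} (\<lambda>u. \<bar>2 * f u * f' u\<bar>)"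
proof -
  have cont: "continuous_on S f" "continuous_on S f'" for S
    using has_real_derivative_imp_continuous_on[OF df] continuous_on_subset[OF cf'] by auto
  have "((\<lambda>u. f u ^ 2) has_real_derivative 2 * f u * f' u) (at u)" for u
    using DERIV_mult[OF df df, of u] by (simp add: power2_eq_square algebra_simps)
  hence I: "((\<lambda>u. 2 * f u * f' u) has_integral (f t ^ 2 - f s ^ 2)) {s..t}"
    by (intro fundamental_theorem_of_calculus st(2))
       (auto simp: has_real_derivative_iff_has_vector_derivative[symmetric] intro: has_field_derivative_at_within)
  have "\<bar>f t ^ 2 - f s ^ 2\<bar> \<le> integral {s..t} (\<lambda>u. \<bar>2 * f u * f' u\<bar>)"
    using integral_norm_bound_integral[of "\<lambda>u. 2 * f u * f' u" "{s..t}" "\<lambda>u. \<bar>2 * f u * f' u\<bar>"] I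
    by (auto simp: integral_unique integrable_continuous_real continuous_intros cont has_integral_integrable)
  also have "\<dots> \<le> integral {c..d} (\<lambda>u. \<bar>2 * f u * f' u\<bar>)"
    by (rule integral_subset_le) (use st in \<open>auto intro!: integrable_continuous_real continuous_intros cont\<close>)
  finally show ?thesis .
qed

lemma power2_le_integral_of_zero:
  fixes f f' :: "real \<Rightarrow> real"
  assumes df: "\<And>x. (f has_real_derivative f' x) (at x)" and cf': "continuous_on UNIV f'"
    and cd: "c < d" and x0: "x0 \<in> {c..d}" "f x0 = 0" and t: "t \<in> {c..d}"
  shows "f t ^ 2 \<le> 4 * (d - c) * integral {c..d} (\<lambda>u. f' u ^ 2)"
proof -
  have cont: "continuous_on S f" "continuous_on S f'" for S
    using has_real_derivative_imp_continuous_on[OF df] continuous_on_subset[OF cf'] by auto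
  have "continuous_on {c..d} (\<lambda>y. f y ^ 2)" by (intro continuous_intros cont)
  then obtain xm where xm: "xm \<in> {c..d}" "\<And>y. y \<in> {c..d} \<Longrightarrow> f y ^ 2 \<le> f xm ^ 2"
    using continuous_attains_sup[of "{c..d}" "\<lambda>y. f y ^ 2"] cd by auto
  define M where "M = f xm ^ 2"
  define k where "k = 2 * (d - c)"
  have k: "k > 0" using cd by (simp add: k_def)
  have amgm: "\<bar>2 * f u * f' u\<bar> \<le> f u ^ 2 / k + k * f' u ^ 2" for u
  proof -
    have "0 \<le> (\<bar>f u\<bar> - k * \<bar>f' u\<bar>)^2 / k" using k by simp
    also have "\<dots> = f u ^ 2 / k - 2 * \<bar>f u\<bar> * \<bar>f' u\<bar> + k * f' u ^ 2"
      using k by (simp add: power2_eq_square field_simps abs_mult_self_eq)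
    finally show ?thesis by (simp add: abs_mult)
  qed
  have "M \<le> integral {c..d} (\<lambda>u. \<bar>2 * f u * f' u\<bar>)"
    using abs_diff_power2_le_integral[OF df cf', of c x0 xm d] abs_diff_power2_le_integral[OF df cf', of c xm x0 d]
      x0 xm by (cases "x0 \<le> xm") (auto simp: M_def abs_minus_commute)
  also have "\<dots> \<le> integral {c..d} (\<lambda>u. M / k + k * f' u ^ 2)"
    using amgm xm k
    by (intro integral_le) (auto simp: M_def intro!: integrable_continuous_real continuous_intros cont
        order_trans[OF amgm] divide_right_mono)
  also have "\<dots> = (d - c) * (M / k) + k * integral {c..d} (\<lambda>u. f' u ^ 2)"
    using cd by (subst integral_add) (auto intro!: integrable_continuous_real continuous_intros cont)
  also have "(d - c) * (M / k) = M / 2" using cd by (simp add: k_def field_simps)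
  finally have "M \<le> 2 * k * integral {c..d} (\<lambda>u. f' u ^ 2)" by simp
  moreover have "f t ^ 2 \<le> M" using xm(2)[OF t] by (simp add: M_def)
  ultimately show ?thesis by (simp add: k_def)
qed

lemma weighted_poincare_interval:
  fixes f f' r :: "real \<Rightarrow> real"
  assumes df: "\<And>x. (f has_real_derivative f' x) (at x)" and cf': "continuous_on UNIV f'"
    and cr: "continuous_on UNIV r" and cd: "c < d" and m: "m > 0"
    and bnd: "\<And>t. t \<in> {c..d} \<Longrightarrow> m \<le> r t \<and> r t \<le> M"
    and zero: "((\<lambda>t. f t * r t) has_integral 0) {c..d}"
  shows "integral {c..d} (\<lambda>t. f t^2 * r t) \<le> 4 * (d - c)^2 * (M / m) * integral {c..d} (\<lambda>t. f' t^2 * r t)"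
proof -
  have cont: "continuous_on S f" "continuous_on S f'" "continuous_on S r" for S
    using has_real_derivative_imp_continuous_on[OF df] continuous_on_subset[OF cf']
      continuous_on_subset[OF cr] by auto
  obtain x0 where x0: "x0 \<in> {c..d}" "f x0 = 0"
    using exists_zero_of_weighted_integral_eq_0[OF cont(1,3) cd _ zero] bnd m by fastforce
  define I where "I = integral {c..d} (\<lambda>u. f' u ^ 2)"
  have M0: "M \<ge> 0" using bnd[of c] cd m by auto
  have "integral {c..d} (\<lambda>t. f t^2 * r t) \<le> integral {c..d} (\<lambda>t. 4 * (d - c) * I * M)"
  proof (rule integral_le)
    fix t assume t: "t \<in> {c..d}"
    have "f t^2 \<le> 4 * (d - c) * I" unfolding I_def by (rule power2_le_integral_of_zero[OF df cf' cd x0 t])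
    moreover from this have "0 \<le> 4 * (d - c) * I" by (meson order_trans zero_le_power2)
    ultimately show "f t^2 * r t \<le> 4 * (d - c) * I * M"
      using bnd[OF t] m by (intro mult_mono) auto
  qed (auto intro!: integrable_continuous_real continuous_intros cont)
  also have "\<dots> = 4 * (d - c)^2 * M * I" using cd by (simp add: power2_eq_square)
  also have "\<dots> \<le> 4 * (d - c)^2 * M * (integral {c..d} (\<lambda>t. f' t^2 * r t) / m)"
  proof -
    have "I \<le> integral {c..d} (\<lambda>t. f' t^2 * r t / m)"
      unfolding I_def using bnd m
      by (intro integral_le) (auto intro!: integrable_continuous_real continuous_intros cont
          simp: field_simps intro: mult_right_mono)
    thus ?thesis using M0 by (intro mult_left_mono) auto
  qed
  finally show ?thesis by (simp add: field_simps)
qed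

definition cell :: "real \<Rightarrow> real \<Rightarrow> nat \<Rightarrow> real set" where
  "cell c l j = {c + real j * l .. c + real (Suc j) * l}"

lemma integral_eq_sum_cells:
  fixes g :: "real \<Rightarrow> real"
  assumes "continuous_on UNIV g" "l \<ge> 0"
  shows "integral {c..c + real n * l} g = (\<Sum>j<n. integral (cell c l j) g)"
proof (induction n)
  case (Suc n)
  have "integral {c..c + real n * l} g + integral (cell c l n) g = integral {c..c + real (Suc n) * l} g"
    unfolding cell_def using assms
    by (intro Henstock_Kurzweil_Integration.integral_combine)
       (auto intro: mult_right_mono integrable_continuous_real continuous_on_subset)
  thus ?case using Suc by simp
qed simp

lemma cell_eq: "cell c l j = {c + real j * l .. c + real j * l + l}"
  unfolding cell_def by (simp add: distrib_right add.assoc)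

lemma cell_bounds:
  assumes "s \<in> cell (- R) (2 * R / real n) j" "j < n" "R > 0"
  shows "\<bar>s\<bar> \<le> R" and "t \<in> cell (- R) (2 * R / real n) j \<Longrightarrow> \<bar>s - t\<bar> \<le> 2 * R / real n"
proof -
  have "real (Suc j) * (2 * R / real n) \<le> real n * (2 * R / real n)"
    using assms by (intro mult_right_mono) auto
  moreover have "0 \<le> real j * (2 * R / real n)" using assms by simp
  ultimately show "\<bar>s\<bar> \<le> R" using assms(1,2) unfolding cell_def by auto
  note cell_eq[of "- R" "2 * R / real n" j]
  thus "\<bar>s - t\<bar> \<le> 2 * R / real n" if "t \<in> cell (- R) (2 * R / real n) j"
    using assms(1) that by (simp only: atLeastAtMost_iff) linarith
qed

lemma rho_le_exp_mult_rho_cell: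
  fixes n :: nat
  assumes a1: "\<alpha> > 1" and R0: "R > 0" and Rp: "R powr \<alpha> = 4 * \<alpha> * real n" and j: "j < n"
    and s: "s \<in> cell (- R) (2 * R / real n) j" and t: "t \<in> cell (- R) (2 * R / real n) j"
  shows "rho \<alpha> s \<le> exp (8 * \<alpha>) * rho \<alpha> t"
proof -
  have "rho \<alpha> s \<le> exp (R powr (\<alpha> - 1) * \<bar>s - t\<bar>) * rho \<alpha> t"
    using cell_bounds[OF s j R0] cell_bounds[OF t j R0] by (intro rho_le_exp_mult_rho a1) auto
  also have "R powr (\<alpha> - 1) * \<bar>s - t\<bar> \<le> R powr (\<alpha> - 1) * (2 * R / real n)"
    using cell_bounds(2)[OF s j R0 t] by (intro mult_left_mono) auto
  also have "R powr (\<alpha> - 1) * (2 * R / real n) = 8 * \<alpha>"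
    using R0 j Rp by (simp add: powr_diff field_simps)
  finally show ?thesis using rho_pos[of \<alpha> t] by (simp add: mult_right_mono)
qed

lemma weighted_poincare_cells:
  fixes f f' r :: "real \<Rightarrow> real"
  assumes df: "\<And>x. (f has_real_derivative f' x) (at x)" and cf': "continuous_on UNIV f'"
    and cr: "continuous_on UNIV r" and rpos: "\<And>t. r t > 0" and l: "l > 0" and E: "E > 0"
    and ratio: "\<And>j s t. j < n \<Longrightarrow> s \<in> cell c l j \<Longrightarrow> t \<in> cell c l j \<Longrightarrow> r s \<le> E * r t"
    and orth: "\<And>j. j < n \<Longrightarrow> ((\<lambda>t. f t * r t) has_integral 0) (cell c l j)"
  shows "integral {c..c + real n * l} (\<lambda>t. f t^2 * r t)
           \<le> 4 * l^2 * E^2 * integral {c..c + real n * l} (\<lambda>t. f' t^2 * r t)"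
proof -
  have cont: "continuous_on UNIV (\<lambda>t. f t^2 * r t)" "continuous_on UNIV (\<lambda>t. f' t^2 * r t)"
    using has_real_derivative_imp_continuous_on[OF df] by (auto intro!: continuous_intros cf' cr)
  have cell_bound: "integral (cell c l j) (\<lambda>t. f t^2 * r t) \<le> 4 * l^2 * E^2 * integral (cell c l j) (\<lambda>t. f' t^2 * r t)"
    if j: "j < n" for j
  proof -
    define a where "a = c + real j * l"
    have cell: "cell c l j = {a..a + l}" by (simp add: cell_def a_def algebra_simps)
    have "r a / E \<le> r t \<and> r t \<le> E * r a" if "t \<in> {a..a + l}" for t
      using ratio[OF j, of a t] ratio[OF j, of t a] that l E by (auto simp: cell field_simps)
    hence "integral {a..a + l} (\<lambda>t. f t^2 * r t)
             \<le> 4 * (a + l - a)^2 * ((E * r a) / (r a / E)) * integral {a..a + l} (\<lambda>t. f' t^2 * r t)"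
      using orth[OF j] l E rpos[of a] unfolding cell
      by (intro weighted_poincare_interval[OF df cf' cr]) auto
    also have "4 * (a + l - a)^2 * ((E * r a) / (r a / E)) = 4 * l^2 * E^2"
      using rpos[of a] E by (simp add: power2_eq_square)
    finally show ?thesis unfolding cell .
  qed
  have "(\<Sum>j<n. integral (cell c l j) (\<lambda>t. f t^2 * r t))
          \<le> 4 * l^2 * E^2 * (\<Sum>j<n. integral (cell c l j) (\<lambda>t. f' t^2 * r t))"
    unfolding sum_distrib_left using cell_bound by (intro sum_mono) simp
  thus ?thesis
    using integral_eq_sum_cells[OF cont(1), of l c n] integral_eq_sum_cells[OF cont(2), of l c n] l by simp
qed

lemma local_energy_estimate:
  fixes f f' :: "real \<Rightarrow> real" and n :: nat
  assumes a2: "\<alpha> > 2" and df: "\<And>x. (f has_real_derivative f' x) (at x)"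
    and cf': "continuous_on UNIV f'" and n: "n \<ge> 1" and R: "R > 0" and E: "E > 0"
    and ratio: "\<And>j s t. j < n \<Longrightarrow> s \<in> cell (- R) (2 * R / real n) j \<Longrightarrow> t \<in> cell (- R) (2 * R / real n) j
                  \<Longrightarrow> rho \<alpha> s \<le> E * rho \<alpha> t"
    and Wt: "Wt > 0" "\<And>t. \<bar>t\<bar> \<ge> R \<Longrightarrow> W \<alpha> t \<ge> Wt"
    and W0: "W0 \<ge> 0" "\<And>t. \<bar>t\<bar> \<le> R \<Longrightarrow> W \<alpha> t \<ge> - W0"
    and orth: "\<And>j. j < n \<Longrightarrow> ((\<lambda>t. f t * rho \<alpha> t) has_integral 0) (cell (- R) (2 * R / real n) j)"
    and ab: "a \<le> - R" "R \<le> b"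
  defines "P \<equiv> 4 * (2 * R / real n)^2 * E^2"
  shows "integral {a..b} (\<lambda>t. f t^2 * rho \<alpha> t) \<le> ((1 + W0 * P) / Wt + P) * integral {a..b} (\<lambda>t. f' t^2 * rho \<alpha> t)"
proof -
  define g1 where "g1 t = f t^2 * rho \<alpha> t" for t
  define g2 where "g2 t = f' t^2 * rho \<alpha> t" for t
  define g3 where "g3 t = f t^2 * W \<alpha> t * rho \<alpha> t" for t
  have cont: "continuous_on S g1" "continuous_on S g2" "continuous_on S g3" for S
    using has_real_derivative_imp_continuous_on[OF df] continuous_on_subset[OF cf'] a2
    unfolding g1_def[abs_def] g2_def[abs_def] g3_def[abs_def]
    by (auto intro!: continuous_intros continuous_on_rho continuous_on_W)
  have int: "g integrable_on {x..y}" if "continuous_on UNIV g" for g :: "real \<Rightarrow> real" and x y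
    by (intro integrable_continuous_real continuous_on_subset[OF that]) auto
  have "g1 t \<ge> 0" "g2 t \<ge> 0" for t using rho_pos[of \<alpha> t] by (auto simp: g1_def g2_def)
  hence nonneg: "integral {x..y} g1 \<ge> 0" "integral {x..y} g2 \<ge> 0" for x y
    by (auto intro!: integral_nonneg int cont)
  have inner: "integral {-R..R} g1 \<le> P * integral {-R..R} g2"
  proof -
    have "- R + real n * (2 * R / real n) = R" using n by simp
    thus ?thesis
      using weighted_poincare_cells[where l = "2 * R / real n" and n = n and c = "- R", OF df cf' continuous_on_rho rho_pos _ E ratio orth] R n a2
      by (simp add: g1_def[abs_def] g2_def[abs_def] P_def)
  qed
  have lower: "w * integral {x..y} g1 \<le> integral {x..y} g3" if "\<And>t. t \<in> {x..y} \<Longrightarrow> w \<le> W \<alpha> t" for x y w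
  proof -
    have "w * g1 t \<le> g3 t" if "t \<in> {x..y}" for t
      using mult_right_mono[OF \<open>t \<in> {x..y} \<Longrightarrow> w \<le> W \<alpha> t\<close>[OF that], of "f t^2 * rho \<alpha> t"] rho_pos[of \<alpha> t]
      by (simp add: g1_def g3_def mult_ac)
    hence "integral {x..y} (\<lambda>t. w * g1 t) \<le> integral {x..y} g3"
      by (intro integral_le int cont continuous_intros) auto
    thus ?thesis by simp
  qed
  have split: "integral {a..b} g = integral {a..-R} g + integral {-R..R} g + integral {R..b} g"
    if "continuous_on UNIV g" for g :: "real \<Rightarrow> real"
    using ab R by (intro integral_combine3 continuous_on_subset[OF that]) auto
  define D where "D = integral {a..b} g2"
  have "integral {-R..R} g2 \<le> D"
    using split[OF cont(2)] nonneg(2)[of a "-R"] nonneg(2)[of R b] by (simp add: D_def)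
  hence inner_D: "integral {-R..R} g1 \<le> P * D"
    using inner mult_left_mono[of "integral {-R..R} g2" D P] by (simp add: P_def)
  have "integral {a..b} g3 \<le> D"
    unfolding D_def g2_def g3_def using ab R by (intro ground_state_inequality[OF a2 df cf']) auto
  moreover have "Wt * integral {a..-R} g1 \<le> integral {a..-R} g3" "Wt * integral {R..b} g1 \<le> integral {R..b} g3"
    using Wt(2) R by (auto intro!: lower)
  moreover have "- W0 * integral {-R..R} g1 \<le> integral {-R..R} g3"
    by (rule lower) (use W0(2) in auto)
  ultimately have "Wt * integral {a..-R} g1 + Wt * integral {R..b} g1 \<le> D + W0 * integral {-R..R} g1"
    using split[OF cont(3)] by linarith
  also have "\<dots> \<le> D + W0 * (P * D)" using inner_D W0(1) by (simp add: mult_left_mono)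
  finally have outer: "integral {a..-R} g1 + integral {R..b} g1 \<le> (1 + W0 * P) / Wt * D"
    using Wt(1) by (simp add: field_simps)
  thus ?thesis using split[OF cont(1)] inner_D unfolding g1_def[abs_def] g2_def[abs_def] D_def
    by (simp add: algebra_simps)
qed

section \<open>Vanishing of the boundary flux at infinity\<close>

lemma power2_le_power2_of_mult_deriv_nonneg:
  fixes F F' :: "real \<Rightarrow> real"
  assumes dF: "\<And>x. (F has_real_derivative F' x) (at x)"
    and nonneg: "\<And>x. s \<le> x \<Longrightarrow> x \<le> t \<Longrightarrow> 0 \<le> F x * F' x" and st: "s \<le> t"
  shows "F s ^ 2 \<le> F t ^ 2"
proof (rule DERIV_nonneg_imp_nondecreasing[OF st, of "\<lambda>u. F u ^ 2"])
  fix x assume "s \<le> x" "x \<le> t"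
  thus "\<exists>y. ((\<lambda>u. F u ^ 2) has_real_derivative y) (at x) \<and> 0 \<le> y"
    using DERIV_mult[OF dF dF, of x] nonneg[of x]
    by (intro exI[of _ "2 * (F x * F' x)"]) (auto simp: power2_eq_square algebra_simps)
qed

lemma abs_mult_flux_increment_le:
  fixes F G r \<Phi> :: "real \<Rightarrow> real"
  assumes flux: "((\<lambda>t. G t * r t) has_integral (\<Phi> y - \<Phi> x)) {x..y}"
    and rpos: "\<And>t. r t > 0" and mono: "\<And>t. t \<in> {x..y} \<Longrightarrow> F x ^ 2 \<le> F t ^ 2"
    and iF: "(\<lambda>t. F t^2 * r t) integrable_on {x..y}" and iG: "(\<lambda>t. G t^2 * r t) integrable_on {x..y}"
    and \<beta>: "\<beta> > 0"
  shows "\<bar>F x * (\<Phi> y - \<Phi> x)\<bar>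
           \<le> (\<beta> * integral {x..y} (\<lambda>t. F t^2 * r t) + integral {x..y} (\<lambda>t. G t^2 * r t) / \<beta>) / 2"
proof -
  define bd where "bd t = (\<beta> * (F t^2 * r t) + G t^2 * r t / \<beta>) / 2" for t
  have bd: "(bd has_integral
      ((\<beta> * integral {x..y} (\<lambda>t. F t^2 * r t) + integral {x..y} (\<lambda>t. G t^2 * r t) / \<beta>) / 2)) {x..y}"
    unfolding bd_def[abs_def] using iF iG
    by (intro has_integral_divide has_integral_add has_integral_mult_right integrable_integral)
  have "norm (F x * (G t * r t)) \<le> bd t" if t: "t \<in> {x..y}" for t
  proof -
    have "0 \<le> (\<beta> * \<bar>F x\<bar> - \<bar>G t\<bar>)^2 / \<beta>" using \<beta> by simp
    also have "\<dots> = \<beta> * F x^2 - 2 * \<bar>F x * G t\<bar> + G t^2 / \<beta>"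
      using \<beta> by (simp add: power2_eq_square field_simps abs_mult abs_mult_self_eq)
    finally have "\<bar>F x * G t\<bar> * r t \<le> ((\<beta> * F x^2 + G t^2 / \<beta>) / 2) * r t"
      using rpos[of t] by (intro mult_right_mono) auto
    also have "\<dots> \<le> ((\<beta> * F t^2 + G t^2 / \<beta>) / 2) * r t"
      using mono[OF t] \<beta> rpos[of t] by (intro mult_right_mono) auto
    finally show ?thesis using rpos[of t] by (simp add: bd_def field_simps abs_mult)
  qed
  moreover have I: "((\<lambda>t. F x * (G t * r t)) has_integral F x * (\<Phi> y - \<Phi> x)) {x..y}"
    by (rule has_integral_mult_right[OF flux])
  ultimately have "norm (F x * (\<Phi> y - \<Phi> x)) \<le> integral {x..y} bd"
    using integral_norm_bound_integral[OF has_integral_integrable[OF I] has_integral_integrable[OF bd]]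
    unfolding integral_unique[OF I] by blast
  thus ?thesis by (simp add: integral_unique[OF bd])
qed

lemma weight_ratio_bound_of_flux_lower_bound:
  fixes F F' r :: "real \<Rightarrow> real"
  assumes dF: "\<And>x. (F has_real_derivative F' x) (at x)"
    and cr: "continuous_on UNIV r" and rpos: "\<And>t. r t > 0"
    and rdec: "\<And>s t. x \<le> s \<Longrightarrow> s \<le> t \<Longrightarrow> r t \<le> r s"
    and mono: "\<And>s t. x \<le> s \<Longrightarrow> s \<le> t \<Longrightarrow> F s ^ 2 \<le> F t ^ 2"
    and sign: "\<And>t. x \<le> t \<Longrightarrow> F t * F' t > 0"
    and lower: "\<And>t. x \<le> t \<Longrightarrow> c / r t \<le> F x * F' t" and c: "c > 0"
    and Fb: "\<And>s t. integral {s..t} (\<lambda>u. F u^2 * r u) \<le> B"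
    and y: "x \<le> y"
  shows "r (y + 2) / (r y)^2 \<le> F x ^ 2 * B / c^2"
proof -
  have "F x * F y > 0"
  proof -
    have "0 < c / r y" using c rpos[of y] by simp
    hence "0 < F x * F' y" using lower[OF y] by linarith
    hence "0 < (F x * F' y) * (F y * F' y)" using sign[OF y] by (rule mult_pos_pos)
    hence "0 < (F x * F y) * (F' y)^2" by (simp add: power2_eq_square mult_ac)
    thus ?thesis by (simp add: zero_less_mult_iff)
  qed
  have "((\<lambda>t. F x * F' t) has_integral (F x * (F (y + 1) - F y))) {y..y + 1}"
    by (intro has_integral_mult_right fundamental_theorem_of_calculus)
       (auto simp: has_real_derivative_iff_has_vector_derivative[symmetric] intro: has_field_derivative_at_within dF)
  moreover have "c / r y \<le> F x * F' t" if "t \<in> {y..y + 1}" for t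
  proof -
    have "c / r y \<le> c / r t" using rdec[of y t] rpos[of t] rpos[of y] c that y by (intro divide_left_mono) auto
    also have "\<dots> \<le> F x * F' t" using lower[of t] that y by auto
    finally show ?thesis .
  qed
  ultimately have "c / r y \<le> F x * (F (y + 1) - F y)"
    using has_integral_le[OF has_integral_const_real[of "c / r y" y "y + 1"]] by simp
  hence "c / r y \<le> F x * F (y + 1)" using \<open>F x * F y > 0\<close> by (simp add: algebra_simps)
  hence sq: "(c / r y)^2 \<le> F x ^ 2 * F (y + 1) ^ 2"
    using power_mono[of "c / r y" "F x * F (y + 1)" 2] c rpos[of y] by (simp add: power_mult_distrib)
  have B: "F (y + 1) ^ 2 * r (y + 2) \<le> B"
  proof -
    have "((\<lambda>u. F (y + 1) ^ 2 * r (y + 2)) has_integral F (y + 1) ^ 2 * r (y + 2)) {y + 1..y + 2}"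
      using has_integral_const_real[of "F (y + 1) ^ 2 * r (y + 2)" "y + 1" "y + 2"] by simp
    hence "F (y + 1) ^ 2 * r (y + 2) \<le> integral {y + 1..y + 2} (\<lambda>u. F u^2 * r u)"
    proof (rule has_integral_le)
      show "((\<lambda>u. F u^2 * r u) has_integral integral {y + 1..y + 2} (\<lambda>u. F u^2 * r u)) {y + 1..y + 2}"
        using has_real_derivative_imp_continuous_on[OF dF] cr
        by (intro integrable_integral integrable_continuous_real continuous_intros) (auto intro: continuous_on_subset)
      fix t assume "t \<in> {y + 1..y + 2}"
      thus "F (y + 1) ^ 2 * r (y + 2) \<le> F t^2 * r t"
        using mono[of "y + 1" t] rdec[of t "y + 2"] rpos[of "y + 2"] y by (intro mult_mono) auto
    qed
    also have "\<dots> \<le> B" by (rule Fb)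
    finally show ?thesis .
  qed
  have "(c / r y)^2 * r (y + 2) \<le> (F x ^ 2 * F (y + 1) ^ 2) * r (y + 2)"
    using sq rpos[of "y + 2"] by (simp add: mult_right_mono)
  also have "\<dots> = F x ^ 2 * (F (y + 1) ^ 2 * r (y + 2))" by (simp add: mult.assoc)
  also have "\<dots> \<le> F x ^ 2 * B" using B by (simp add: mult_left_mono)
  finally show ?thesis using c rpos[of y] by (simp add: power_divide field_simps)
qed

text \<open>If the flux \<open>F F' r\<close> stayed above \<open>\<epsilon>\<close>, then \<open>F\<^sup>2\<close> would increase and
  \<open>F(x) F'(y) \<ge> \<epsilon> / (2 r(y))\<close>; integrating over \<open>[y, y + 1]\<close> makes \<open>F(y + 1)\<^sup>2 r(y + 2)\<close>
  at least of order \<open>r(y + 2) / r(y)\<^sup>2\<close>, which is unbounded although \<open>F\<^sup>2 r\<close> is integrable.\<close>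

lemma exists_small_flux:
  fixes F F' G r :: "real \<Rightarrow> real"
  assumes dF: "\<And>x. (F has_real_derivative F' x) (at x)"
    and cr: "continuous_on UNIV r" and rpos: "\<And>x. r x > 0"
    and rdec: "\<And>x y. 0 \<le> x \<Longrightarrow> x \<le> y \<Longrightarrow> r y \<le> r x"
    and flux: "\<And>x y. x \<le> y \<Longrightarrow> ((\<lambda>t. G t * r t) has_integral (r y * F' y - r x * F' x)) {x..y}"
    and iG: "\<And>x y. (\<lambda>t. G t^2 * r t) integrable_on {x..y}"
    and G_bound: "\<And>x y. integral {x..y} (\<lambda>t. G t^2 * r t) \<le> BG"
    and F_tail: "\<And>\<delta>. \<delta> > 0 \<Longrightarrow> \<exists>X. \<forall>x y. X \<le> x \<longrightarrow> x \<le> y \<longrightarrow> integral {x..y} (\<lambda>t. F t^2 * r t) \<le> \<delta>"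
    and F_bound: "\<And>x y. integral {x..y} (\<lambda>t. F t^2 * r t) \<le> BF"
    and grow: "filterlim (\<lambda>y. r (y + 2) / (r y)^2) at_top at_top"
    and e: "\<epsilon> > 0"
  shows "\<exists>b\<ge>T. F b * (r b * F' b) \<le> \<epsilon>"
proof (rule ccontr)
  assume "\<not> ?thesis"
  hence H: "F b * (r b * F' b) > \<epsilon>" if "b \<ge> max T 0" for b using that by force
  have sign: "F b * F' b > 0" if "b \<ge> max T 0" for b
  proof -
    have "0 < F b * (r b * F' b)" using H[OF that] e by linarith
    hence "0 < r b * (F b * F' b)" by (simp add: mult_ac)
    thus ?thesis using rpos[of b] by (simp add: zero_less_mult_iff)
  qed
  have mono: "F s ^ 2 \<le> F t ^ 2" if "max T 0 \<le> s" "s \<le> t" for s t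
    using that sign by (intro power2_le_power2_of_mult_deriv_nonneg[OF dF]) (auto intro: less_imp_le)
  have cont: "continuous_on S (\<lambda>t. F t^2 * r t)" for S
    using has_real_derivative_imp_continuous_on[OF dF] continuous_on_subset[OF cr]
    by (auto intro!: continuous_intros)
  define B where "B = \<bar>BG\<bar> + 1"
  define \<beta> where "\<beta> = 2 * B / \<epsilon>"
  have B: "B > 0" "BG \<le> B" and \<beta>: "\<beta> > 0" using e by (auto simp: B_def \<beta>_def)
  obtain X where X: "\<And>x y. X \<le> x \<Longrightarrow> x \<le> y \<Longrightarrow> integral {x..y} (\<lambda>t. F t^2 * r t) \<le> \<epsilon> / (2 * \<beta>)"
    using F_tail[of "\<epsilon> / (2 * \<beta>)"] e \<beta> by auto
  define x where "x = max X (max T 0)"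
  have x: "x \<ge> max T 0" "x \<ge> X" by (auto simp: x_def)
  have lower: "\<epsilon> / (2 * r y) \<le> F x * F' y" if y: "y \<ge> x" for y
  proof -
    have "\<bar>F x * (r y * F' y - r x * F' x)\<bar>
            \<le> (\<beta> * integral {x..y} (\<lambda>t. F t^2 * r t) + integral {x..y} (\<lambda>t. G t^2 * r t) / \<beta>) / 2"
      using x y mono
      by (intro abs_mult_flux_increment_le[OF flux[OF y] rpos _ _ iG \<beta>] integrable_continuous_real cont) auto
    also have "\<dots> \<le> (\<beta> * (\<epsilon> / (2 * \<beta>)) + B / \<beta>) / 2"
      using X[OF x(2) y] G_bound[of x y] B \<beta>
      by (intro divide_right_mono add_mono mult_left_mono) auto
    also have "\<dots> = \<epsilon> / 2" using \<beta> e B by (simp add: \<beta>_def field_simps)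
    finally have "\<bar>F x * (r y * F' y) - F x * (r x * F' x)\<bar> \<le> \<epsilon> / 2" by (simp only: right_diff_distrib)
    hence "\<epsilon> / 2 < F x * (r y * F' y)" using abs_le_D2 H[OF x(1)] by fastforce
    hence "\<epsilon> / 2 < r y * (F x * F' y)" by (simp add: mult_ac)
    thus ?thesis using rpos[of y] by (simp add: pos_divide_le_eq mult_ac)
  qed
  have "eventually (\<lambda>y. r (y + 2) / (r y)^2 \<le> F x ^ 2 * BF / (\<epsilon> / 2)^2) at_top"
    using eventually_ge_at_top[of x]
  proof eventually_elim
    case (elim y)
    thus ?case using x e
      by (intro weight_ratio_bound_of_flux_lower_bound[OF dF cr rpos _ _ sign _ _ F_bound])
         (auto simp: rdec mono lower)
  qed
  moreover have "eventually (\<lambda>y. r (y + 2) / (r y)^2 > F x ^ 2 * BF / (\<epsilon> / 2)^2) at_top"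
    using grow by (simp add: filterlim_at_top_dense)
  ultimately have "eventually (\<lambda>y. r (y + 2) / (r y)^2 \<le> F x ^ 2 * BF / (\<epsilon> / 2)^2
      \<and> r (y + 2) / (r y)^2 > F x ^ 2 * BF / (\<epsilon> / 2)^2) at_top"
    by (rule eventually_conj)
  then obtain N where "\<And>y. y \<ge> N \<Longrightarrow> r (y + 2) / (r y)^2 \<le> F x ^ 2 * BF / (\<epsilon> / 2)^2
      \<and> r (y + 2) / (r y)^2 > F x ^ 2 * BF / (\<epsilon> / 2)^2"
    by (auto simp: eventually_at_top_linorder)
  from this[OF order_refl] show False by linarith
qed

lemma filterlim_rho_shift_over_square:
  assumes "\<alpha> > 2"
  shows "filterlim (\<lambda>y. rho \<alpha> (y + 2) / (rho \<alpha> y)^2) at_top at_top"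
proof -
  have "filterlim (\<lambda>y::real. exp (2 * (y powr \<alpha> / \<alpha>) - (y + 2) powr \<alpha> / \<alpha>)) at_top at_top"
    using assms by (intro filterlim_compose[OF exp_at_top]) real_asymp
  moreover have "eventually (\<lambda>y. exp (2 * (y powr \<alpha> / \<alpha>) - (y + 2) powr \<alpha> / \<alpha>)
                               = rho \<alpha> (y + 2) / (rho \<alpha> y)^2) at_top"
    using eventually_ge_at_top[of 0]
  proof eventually_elim
    case (elim y)
    hence "rho \<alpha> (y + 2) / (rho \<alpha> y)^2 = exp (- ((y + 2) powr \<alpha> / \<alpha>)) / exp (- (y powr \<alpha> / \<alpha>))^2"
      by (simp add: rho_def V_def)
    also have "\<dots> = exp (2 * (y powr \<alpha> / \<alpha>) - (y + 2) powr \<alpha> / \<alpha>)"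
      by (simp add: power2_eq_square exp_diff[symmetric] exp_add[symmetric] exp_minus field_simps)
    finally show ?case by simp
  qed
  ultimately show ?thesis by (rule filterlim_cong[OF refl refl, THEN iffD1, rotated])
qed

section \<open>The measure \<open>mu\<close> and the domain of \<open>L\<close>\<close>

text \<open>\<open>ennreal\<close> sends negative reals to \<open>0\<close>, so \<open>dens\<close> is the real density of \<open>mu\<close> even in the
  degenerate case \<open>Zc \<alpha> \<le> 0\<close>, where \<open>mu\<close> is the zero measure.\<close>

definition dens :: "real \<Rightarrow> real \<Rightarrow> real" where
  "dens a x = max 0 (exp (- V a x) / Zc a)"

lemma mu_eq_density_dens: "mu a = density lborel (\<lambda>x. ennreal (dens a x))"
proof -
  have "(\<lambda>x. ennreal (exp (- V a x) / Zc a)) = (\<lambda>x. ennreal (dens a x))"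
    by (auto simp: fun_eq_iff dens_def max_def ennreal_eq_0_iff ennreal_neg)
  thus ?thesis by (simp add: mu_def)
qed

lemma borel_measurable_dens:
  assumes "a > 1"
  shows "dens a \<in> borel_measurable borel"
proof -
  have "V a \<in> borel_measurable borel"
    using has_real_derivative_imp_continuous_on[OF V_has_real_derivative[OF assms]]
    by (rule borel_measurable_continuous_onI)
  thus ?thesis unfolding dens_def[abs_def] by simp
qed

lemma integrable_mu_iff:
  assumes "a > 1" "k \<in> borel_measurable borel"
  shows "integrable (mu a) k \<longleftrightarrow> integrable lborel (\<lambda>x. dens a x * k x)"
  unfolding mu_eq_density_dens using integrable_density[of k lborel "dens a"] borel_measurable_dens assms
  by (simp add: dens_def)

lemma integral_mu:
  assumes "a > 1" "k \<in> borel_measurable borel"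
  shows "integral\<^sup>L (mu a) k = integral\<^sup>L lborel (\<lambda>x. dens a x * k x)"
  unfolding mu_eq_density_dens using integral_density[of k lborel "dens a"] borel_measurable_dens assms
  by (simp add: dens_def)

lemma has_integral_rho_mult_of_integrable_mu:
  assumes a: "\<alpha> > 1" and Z: "Zc \<alpha> > 0" and k: "k \<in> borel_measurable borel" and ki: "integrable (mu \<alpha>) k"
  shows "((\<lambda>x. k x * rho \<alpha> x) has_integral (Zc \<alpha> * integral\<^sup>L (mu \<alpha>) k)) UNIV"
proof -
  have "((\<lambda>x. dens \<alpha> x * k x) has_integral integral\<^sup>L (mu \<alpha>) k) UNIV"
    using ki integrable_mu_iff[OF a k] has_integral_integral_lborel integral_mu[OF a k] by simp
  from has_integral_mult_right[OF this, of "Zc \<alpha>"] show ?thesis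
    using Z by (simp add: dens_def rho_def mult_ac)
qed

lemma integrable_mu_mult_L2:
  assumes "a > 1" "f \<in> L2 a" "g \<in> L2 a"
  shows "integrable (mu a) (\<lambda>x. f x * g x)"
proof (rule Bochner_Integration.integrable_bound)
  show "integrable (mu a) (\<lambda>x. (f x)^2 + (g x)^2)" using assms by (simp add: L2_def)
  have "f \<in> borel_measurable borel" "g \<in> borel_measurable borel" using assms by (auto simp: L2_def)
  thus "(\<lambda>x. f x * g x) \<in> borel_measurable (mu a)" by (simp add: mu_def)
  show "AE x in mu a. norm (f x * g x) \<le> norm ((f x)^2 + (g x)^2)"
  proof (rule AE_I2)
    fix x
    have "2 * \<bar>f x * g x\<bar> \<le> (f x)^2 + (g x)^2"
      using sum_squares_bound[of "\<bar>f x\<bar>" "\<bar>g x\<bar>"] by (simp add: abs_mult power2_abs)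
    thus "norm (f x * g x) \<le> norm ((f x)^2 + (g x)^2)" by simp
  qed
qed

lemma indicator_Icc_in_L2:
  assumes a: "a > 1"
  shows "(indicator {c..d} :: real \<Rightarrow> real) \<in> L2 a"
proof -
  have "integrable lborel (\<lambda>x. dens a x * (indicator {c..d} x)^2)"
  proof (rule Bochner_Integration.integrable_bound)
    show "integrable lborel (\<lambda>x. \<bar>1 / Zc a\<bar> * (indicator {c..d} x :: real))"
      using emeasure_lborel_Icc_eq[of c d] by (intro integrable_mult_right integrable_real_indicator) auto
    show "(\<lambda>x. dens a x * (indicator {c..d} x)^2) \<in> borel_measurable lborel"
      using borel_measurable_dens[OF a] by simp
    show "AE x in lborel. norm (dens a x * (indicator {c..d} x)^2) \<le> norm (\<bar>1 / Zc a\<bar> * (indicator {c..d} x :: real))"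
    proof (rule AE_I2)
      fix x
      have e1: "exp (- V a x) \<le> 1" using V_nonneg[of a x] a by simp
      have "dens a x \<le> \<bar>1 / Zc a\<bar>"
      proof (cases "Zc a > 0")
        case True thus ?thesis using e1 by (auto simp: dens_def divide_right_mono)
      next
        case False thus ?thesis by (auto simp: dens_def divide_nonneg_nonpos)
      qed
      moreover have "dens a x \<ge> 0" by (simp add: dens_def)
      ultimately show "norm (dens a x * (indicator {c..d} x)^2) \<le> norm (\<bar>1 / Zc a\<bar> * (indicator {c..d} x :: real))"
        by (auto simp: indicator_def)
    qed
  qed
  thus ?thesis unfolding L2_def using integrable_mu_iff[OF a] by simp
qed

text \<open>For \<open>(f, h)\<close> in the graph, \<open>h \<rho> = (\<rho> f')'\<close> in the sense of absolutely continuous functions;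
  integrating against \<open>f\<close> gives the energy identity on bounded intervals.\<close>

lemma graphL_elim:
  assumes a2: "\<alpha> > 2" and fh: "(f, h) \<in> graphL \<alpha>"
  obtains f' where "\<And>x. (f has_real_derivative f' x) (at x)" "continuous_on UNIV f'"
    "\<And>x y. x \<le> y \<Longrightarrow> ((\<lambda>t. h t * rho \<alpha> t) has_integral (rho \<alpha> y * f' y - rho \<alpha> x * f' x)) {x..y}"
    "\<And>a b. a \<le> b \<Longrightarrow> integral {a..b} (\<lambda>t. f' t^2 * rho \<alpha> t)
       = f b * (rho \<alpha> b * f' b) - f a * (rho \<alpha> a * f' a) - integral {a..b} (\<lambda>t. f t * (h t * rho \<alpha> t))"
proof -
  have a1: "\<alpha> > 1" using a2 by simp
  from fh obtain f' f'' where df: "\<And>x. (f has_real_derivative f' x) (at x)"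
    and f'': "\<And>a b. a \<le> b \<Longrightarrow> f'' absolutely_integrable_on {a..b} \<and> (f'' has_integral (f' b - f' a)) {a..b}"
    and h: "\<And>x. h x = f'' x - dV \<alpha> x * f' x"
    unfolding graphL_def deriv_V[OF a1] by blast
  have "continuous_on {a..b} f'" if "a \<le> b" for a b
    using f'' that by (intro continuous_on_of_has_integral_increments[where g = f'']) (auto simp: absolutely_integrable_on_def)
  hence cf': "continuous_on UNIV f'" by (rule continuous_on_UNIV_of_Icc)
  have hrho: "(\<lambda>t. h t * rho \<alpha> t) = (\<lambda>t. rho \<alpha> t * f'' t + (- dV \<alpha> t * rho \<alpha> t) * f' t)"
    by (simp add: fun_eq_iff h algebra_simps)
  have flux: "((\<lambda>t. h t * rho \<alpha> t) has_integral (rho \<alpha> y * f' y - rho \<alpha> x * f' x)) {x..y}" if "x \<le> y" for x y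
    unfolding hrho using that a2 f'' rho_has_real_derivative[OF a1]
    by (intro integration_by_parts_indefinite_integral) (auto intro!: continuous_intros continuous_on_dV continuous_on_rho)
  have energy: "((\<lambda>t. f t * (h t * rho \<alpha> t) + f' t * (rho \<alpha> t * f' t)) has_integral
         (f b * (rho \<alpha> b * f' b) - f a * (rho \<alpha> a * f' a))) {a..b}" if ab: "a \<le> b" for a b
  proof (rule integration_by_parts_indefinite_integral[OF ab])
    have "(\<lambda>t. rho \<alpha> t * f'' t) absolutely_integrable_on {a..b}"
      using f''[OF ab] compact_imp_bounded[OF compact_continuous_image[OF continuous_on_rho[OF a1] compact_Icc]]
      by (intro absolutely_integrable_bounded_measurable_product_real
          continuous_imp_measurable_on_sets_lebesgue continuous_on_rho a1) auto
    moreover have "(\<lambda>t. (- dV \<alpha> t * rho \<alpha> t) * f' t) absolutely_integrable_on {a..b}"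
      using a2 by (intro absolutely_integrable_continuous_real continuous_intros continuous_on_dV
          continuous_on_rho continuous_on_subset[OF cf']) auto
    ultimately show "(\<lambda>t. h t * rho \<alpha> t) absolutely_integrable_on {a..b}"
      unfolding hrho by (rule set_integral_add(1))
  qed (use df cf' flux in \<open>auto intro: continuous_on_subset\<close>)
  have "integral {a..b} (\<lambda>t. f' t^2 * rho \<alpha> t)
       = f b * (rho \<alpha> b * f' b) - f a * (rho \<alpha> a * f' a) - integral {a..b} (\<lambda>t. f t * (h t * rho \<alpha> t))"
    if ab: "a \<le> b" for a b
  proof -
    have i: "(\<lambda>t. f' t^2 * rho \<alpha> t) integrable_on {a..b}"
      using a1 by (intro integrable_continuous_real continuous_intros continuous_on_subset[OF cf'] continuous_on_rho) auto
    moreover have "(\<lambda>t. f t * (h t * rho \<alpha> t)) integrable_on {a..b}"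
      using integrable_diff[OF has_integral_integrable[OF energy[OF ab]] i] by (simp add: power2_eq_square mult_ac)
    ultimately show ?thesis
      using integral_unique[OF energy[OF ab]] by (simp add: integral_add power2_eq_square mult_ac)
  qed
  with df cf' flux show ?thesis by (rule that)
qed

section \<open>The energy estimate\<close>

lemma exists_small_flux_at_infinity:
  fixes f f' h :: "real \<Rightarrow> real"
  assumes a2: "\<alpha> > 2" and df: "\<And>x. (f has_real_derivative f' x) (at x)"
    and flux: "\<And>x y. x \<le> y \<Longrightarrow> ((\<lambda>t. h t * rho \<alpha> t) has_integral (rho \<alpha> y * f' y - rho \<alpha> x * f' x)) {x..y}"
    and iF: "((\<lambda>x. f x^2 * rho \<alpha> x) has_integral A) UNIV"
    and iH: "((\<lambda>x. h x^2 * rho \<alpha> x) has_integral BH) UNIV"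
    and e: "e > 0"
  shows "\<exists>b\<ge>T. f b * (rho \<alpha> b * f' b) \<le> e"
    and "\<exists>a\<le>-T. - e \<le> f a * (rho \<alpha> a * f' a)"
proof -
  have a1: "\<alpha> > 1" using a2 by simp
  have nonneg: "g x^2 * rho \<alpha> x \<ge> 0" for g :: "real \<Rightarrow> real" and x
    using rho_pos[of \<alpha> x] by auto
  note tails_F = nonneg_has_integral_UNIV_tails[OF iF nonneg[of f]]
    and tails_H = nonneg_has_integral_UNIV_tails[OF iH nonneg[of h]]
  have rdec: "\<And>x y. 0 \<le> x \<Longrightarrow> x \<le> y \<Longrightarrow> rho \<alpha> y \<le> rho \<alpha> x"
    using rho_antimono_abs[of \<alpha>] a2 by simp
  show "\<exists>b\<ge>T. f b * (rho \<alpha> b * f' b) \<le> e"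
    by (rule exists_small_flux[OF df continuous_on_rho[OF a1] rho_pos rdec flux tails_H(1,2) tails_F(3,2)
          filterlim_rho_shift_over_square[OF a2] e])
  have "((\<lambda>x. f (- x)^2 * rho \<alpha> x) has_integral A) UNIV" "((\<lambda>x. h (- x)^2 * rho \<alpha> x) has_integral BH) UNIV"
    using nonneg_has_integral_reflect_UNIV[OF iF nonneg[of f]] nonneg_has_integral_reflect_UNIV[OF iH nonneg[of h]]
    by (simp_all add: rho_minus)
  note tails_F' = nonneg_has_integral_UNIV_tails[OF this(1) nonneg[of "\<lambda>x. f (- x)"]]
    and tails_H' = nonneg_has_integral_UNIV_tails[OF this(2) nonneg[of "\<lambda>x. h (- x)"]]
  have "\<exists>b\<ge>T. f (- b) * (rho \<alpha> b * - f' (- b)) \<le> e"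
  proof (rule exists_small_flux[OF _ continuous_on_rho[OF a1] rho_pos rdec _ _ _ _ _
        filterlim_rho_shift_over_square[OF a2] e])
    show "((\<lambda>x. f (- x)) has_real_derivative - f' (- x)) (at x)" for x
      using DERIV_chain2[OF df DERIV_minus[OF DERIV_ident], of x] by simp
    show "((\<lambda>t. h (- t) * rho \<alpha> t) has_integral rho \<alpha> y * - f' (- y) - rho \<alpha> x * - f' (- x)) {x..y}"
      if "x \<le> y" for x y
      using flux[of "- y" "- x"] that has_integral_reflect_real[of "\<lambda>t. h t * rho \<alpha> t" _ "- x" "- y"]
      by (simp add: rho_minus algebra_simps)
  qed (use tails_F' tails_H' in \<open>simp_all add: rho_minus\<close>)
  then obtain b where "b \<ge> T" "f (- b) * (rho \<alpha> b * - f' (- b)) \<le> e" by blast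
  thus "\<exists>a\<le>-T. - e \<le> f a * (rho \<alpha> a * f' a)"
    by (intro exI[of _ "- b"]) (simp add: rho_minus)
qed

lemma energy_estimate:
  fixes f h :: "real \<Rightarrow> real" and n :: nat
  assumes a2: "\<alpha> > 2" and fh: "(f, h) \<in> graphL \<alpha>"
    and n: "n \<ge> 1" and R: "R > 0" and E: "E > 0"
    and ratio: "\<And>j s t. j < n \<Longrightarrow> s \<in> cell (- R) (2 * R / real n) j \<Longrightarrow> t \<in> cell (- R) (2 * R / real n) j
                  \<Longrightarrow> rho \<alpha> s \<le> E * rho \<alpha> t"
    and Wt: "Wt > 0" "\<And>t. \<bar>t\<bar> \<ge> R \<Longrightarrow> W \<alpha> t \<ge> Wt"
    and W0: "W0 \<ge> 0" "\<And>t. \<bar>t\<bar> \<le> R \<Longrightarrow> W \<alpha> t \<ge> - W0"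
    and orth: "\<And>j. j < n \<Longrightarrow> ((\<lambda>t. f t * rho \<alpha> t) has_integral 0) (cell (- R) (2 * R / real n) j)"
    and iF: "((\<lambda>x. f x^2 * rho \<alpha> x) has_integral A) UNIV"
    and iH: "((\<lambda>x. h x^2 * rho \<alpha> x) has_integral BH) UNIV"
    and iFH: "((\<lambda>x. f x * (h x * rho \<alpha> x)) has_integral B) UNIV"
  defines "P \<equiv> 4 * (2 * R / real n)^2 * E^2"
  shows "A \<le> ((1 + W0 * P) / Wt + P) * (- B)"
proof -
  define K where "K = (1 + W0 * P) / Wt + P"
  have K0: "K \<ge> 0" using Wt W0 by (simp add: K_def P_def)
  obtain f' where df: "\<And>x. (f has_real_derivative f' x) (at x)" and cf': "continuous_on UNIV f'"
    and flux: "\<And>x y. x \<le> y \<Longrightarrow> ((\<lambda>t. h t * rho \<alpha> t) has_integral (rho \<alpha> y * f' y - rho \<alpha> x * f' x)) {x..y}"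
    and energy: "\<And>a b. a \<le> b \<Longrightarrow> integral {a..b} (\<lambda>t. f' t^2 * rho \<alpha> t)
       = f b * (rho \<alpha> b * f' b) - f a * (rho \<alpha> a * f' a) - integral {a..b} (\<lambda>t. f t * (h t * rho \<alpha> t))"
    by (fact graphL_elim[OF a2 fh])
  show ?thesis unfolding K_def[symmetric]
  proof (rule le_of_le_add_epsilon_mult[of _ _ "1 + 3 * K"])
    fix e :: real assume e: "e > 0"
    obtain T1 where "T1 > 0" and T1: "\<And>a b. a \<le> -T1 \<Longrightarrow> T1 \<le> b \<Longrightarrow> \<bar>integral {a..b} (\<lambda>x. f x^2 * rho \<alpha> x) - A\<bar> < e"
      by (fact tail_integral_approx[OF iF e])
    obtain T2 where "T2 > 0" and T2: "\<And>a b. a \<le> -T2 \<Longrightarrow> T2 \<le> b \<Longrightarrow> \<bar>integral {a..b} (\<lambda>x. f x * (h x * rho \<alpha> x)) - B\<bar> < e"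
      by (fact tail_integral_approx[OF iFH e])
    define T where "T = max (max T1 T2) R"
    obtain b where b: "b \<ge> T" "f b * (rho \<alpha> b * f' b) \<le> e"
      using exists_small_flux_at_infinity(1)[OF a2 df flux iF iH e] by blast
    obtain a where a: "a \<le> -T" "- e \<le> f a * (rho \<alpha> a * f' a)"
      using exists_small_flux_at_infinity(2)[OF a2 df flux iF iH e] by blast
    have ab: "a \<le> -R" "R \<le> b" "a \<le> -T1" "T1 \<le> b" "a \<le> -T2" "T2 \<le> b" using a b by (auto simp: T_def)
    have "A < integral {a..b} (\<lambda>x. f x^2 * rho \<alpha> x) + e" using T1[OF ab(3,4)] by linarith
    also have "integral {a..b} (\<lambda>x. f x^2 * rho \<alpha> x) \<le> K * integral {a..b} (\<lambda>t. f' t^2 * rho \<alpha> t)"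
      unfolding K_def P_def by (rule local_energy_estimate[OF a2 df cf' n R E ratio Wt W0 orth ab(1,2)])
    also have "\<dots> \<le> K * (e + e + (- B + e))"
    proof (rule mult_left_mono[OF _ K0])
      have "a \<le> b" using ab(1,2) R by linarith
      thus "integral {a..b} (\<lambda>t. f' t^2 * rho \<alpha> t) \<le> e + e + (- B + e)"
        using energy[of a b] b(2) a(2) T2[OF ab(5,6)] by linarith
    qed
    finally show "A \<le> K * - B + e * (1 + 3 * K)" by (simp add: algebra_simps)
  qed
qed

section \<open>Lower bound for the eigenvalues\<close>

text \<open>The constant of \<open>energy_estimate\<close> at the scale \<open>R = (4 \<alpha> n)\<^bsup>1/\<alpha>\<^esup>\<close>, multiplied by
  \<open>R\<^bsup>2\<alpha>-2\<^esup>\<close>, is at most the following; \<open>exp (8 \<alpha>)\<close> bounds the oscillation of \<open>rho\<close> on a cell.\<close>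

definition eigenvalue_constant :: "real \<Rightarrow> real" where
  "eigenvalue_constant \<alpha> = 8 * (1 + 32 * \<alpha> * (\<alpha> - 1) * exp (8 * \<alpha>)^2) + 256 * \<alpha>^2 * exp (8 * \<alpha>)^2"

lemma eigenvalue_constant_pos: "\<alpha> > 2 \<Longrightarrow> eigenvalue_constant \<alpha> > 0"
  unfolding eigenvalue_constant_def by (intro add_pos_pos mult_pos_pos) auto

lemma energy_constant_le:
  fixes \<alpha> R :: real and n :: nat
  assumes a2: "\<alpha> > 2" and n: "n \<ge> 1" and R0: "R > 0" and Rp: "R powr \<alpha> = 4 * \<alpha> * real n"
  defines "P \<equiv> 4 * (2 * R / real n)^2 * exp (8 * \<alpha>)^2"
  shows "(1 + (\<alpha> - 1) * R powr (\<alpha> - 2) / 2 * P) / (R powr (2 * \<alpha> - 2) / 8) + P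
           \<le> eigenvalue_constant \<alpha> / real n powr (2 * (\<alpha> - 1) / \<alpha>)"
proof -
  have n0: "real n \<ge> 1" using n by simp
  define Q where "Q = R powr (2 * \<alpha> - 2)"
  define W0 where "W0 = (\<alpha> - 1) * R powr (\<alpha> - 2) / 2"
  define E where "E = exp (8 * \<alpha>)"
  have Q0: "Q > 0" using R0 by (simp add: Q_def)
  have "R^2 * Q = R powr 2 * R powr (2 * \<alpha> - 2)" using R0 by (simp add: Q_def powr_realpow)
  also have "\<dots> = R powr (2 * \<alpha>)" by (simp flip: powr_add)
  also have "\<dots> = (R powr \<alpha>)^2" using R0 by (simp add: powr_realpow[symmetric] powr_powr mult.commute)
  finally have RQ: "R^2 * Q = (R powr \<alpha>)^2" .
  have "P * Q = 16 * E^2 * (R^2 * Q) / real n ^ 2" by (simp add: P_def E_def power_divide power_mult_distrib)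
  also have "\<dots> = 256 * \<alpha>^2 * E^2" unfolding RQ Rp using n0 by (simp add: power_mult_distrib)
  finally have PQ: "P * Q = 256 * \<alpha>^2 * E^2" .
  have "R powr (\<alpha> - 2) * R^2 = R powr \<alpha>" using R0 by (simp add: powr_diff power2_eq_square)
  have "W0 * P = 8 * (\<alpha> - 1) * E^2 * (R powr (\<alpha> - 2) * R^2) / real n ^ 2"
    by (simp add: W0_def P_def E_def power_divide power_mult_distrib)
  also have "\<dots> = 32 * \<alpha> * (\<alpha> - 1) * E^2 / n"
    unfolding \<open>R powr (\<alpha> - 2) * R^2 = R powr \<alpha>\<close> Rp using n0 by (simp add: power2_eq_square)
  also have "\<dots> \<le> 32 * \<alpha> * (\<alpha> - 1) * E^2"
    using a2 n0 mult_left_mono[of 1 "real n" "32 * \<alpha> * (\<alpha> - 1) * E^2"] by (simp add: divide_le_eq)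
  finally have W0P: "W0 * P \<le> 32 * \<alpha> * (\<alpha> - 1) * E^2" .
  have "((1 + W0 * P) / (Q / 8) + P) * Q = 8 * (1 + W0 * P) + P * Q" using Q0 by (simp add: field_simps)
  also have "\<dots> \<le> 8 * (1 + 32 * \<alpha> * (\<alpha> - 1) * E^2) + 256 * \<alpha>^2 * E^2"
    unfolding PQ using W0P by (simp add: mult_ac)
  also have "\<dots> = eigenvalue_constant \<alpha>" by (simp add: eigenvalue_constant_def E_def)
  finally have "(1 + W0 * P) / (Q / 8) + P \<le> eigenvalue_constant \<alpha> / Q"
    using Q0 by (simp add: pos_le_divide_eq)
  also have "\<dots> \<le> eigenvalue_constant \<alpha> / real n powr (2 * (\<alpha> - 1) / \<alpha>)"
  proof (rule divide_left_mono)
    have exponent: "\<alpha> * (2 * (\<alpha> - 1) / \<alpha>) = 2 * \<alpha> - 2" using a2 by (simp add: field_simps)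
    have "real n powr (2 * (\<alpha> - 1) / \<alpha>) \<le> (R powr \<alpha>) powr (2 * (\<alpha> - 1) / \<alpha>)"
      unfolding Rp using a2 n0 by (intro powr_mono2) auto
    also have "\<dots> = Q" using exponent by (simp add: Q_def powr_powr)
    finally show "real n powr (2 * (\<alpha> - 1) / \<alpha>) \<le> Q" .
  qed (use a2 n0 Q0 eigenvalue_constant_pos[OF a2] in auto)
  finally show ?thesis unfolding Q_def W0_def .
qed

lemma has_integral_cell_of_orthogonal_indicator:
  assumes a1: "\<alpha> > 1" and Z: "Zc \<alpha> > 0" and f: "f \<in> L2 \<alpha>"
    and orth: "integral\<^sup>L (mu \<alpha>) (\<lambda>x. f x * indicator {c..d} x) = 0"
  shows "((\<lambda>t. f t * rho \<alpha> t) has_integral 0) {c..d}"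
proof -
  have "f \<in> borel_measurable borel" using f by (simp add: L2_def)
  hence "(\<lambda>x. f x * indicator {c..d} x) \<in> borel_measurable borel" by simp
  from has_integral_rho_mult_of_integrable_mu[OF a1 Z this integrable_mu_mult_L2[OF a1 f indicator_Icc_in_L2[OF a1]]]
  have "((\<lambda>x. f x * indicator {c..d} x * rho \<alpha> x) has_integral 0) UNIV" using orth by simp
  moreover have "(\<lambda>x. f x * indicator {c..d} x * rho \<alpha> x) = (\<lambda>x. if x \<in> {c..d} then f x * rho \<alpha> x else 0)"
    by (auto simp: fun_eq_iff indicator_def)
  ultimately have "((\<lambda>x. if x \<in> {c..d} then f x * rho \<alpha> x else 0) has_integral 0) UNIV" by simp
  thus ?thesis unfolding has_integral_restrict_UNIV .
qed

lemma energy_estimate_at_scale: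
  fixes n :: nat
  assumes a2: "\<alpha> > 2" and n: "n \<ge> 1" and fh: "(f, h) \<in> graphL \<alpha>"
    and R0: "R > 0" and Rp: "R powr \<alpha> = 4 * \<alpha> * real n"
    and orth: "\<And>j. j < n \<Longrightarrow> ((\<lambda>t. f t * rho \<alpha> t) has_integral 0) (cell (- R) (2 * R / real n) j)"
    and iF: "((\<lambda>x. f x^2 * rho \<alpha> x) has_integral A) UNIV"
    and iH: "((\<lambda>x. h x^2 * rho \<alpha> x) has_integral BH) UNIV"
    and iFH: "((\<lambda>x. f x * (h x * rho \<alpha> x)) has_integral B) UNIV"
  shows "A \<le> eigenvalue_constant \<alpha> / real n powr (2 * (\<alpha> - 1) / \<alpha>) * - B"
proof -
  have a1: "\<alpha> > 1" using a2 by simp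
  define P where "P = 4 * (2 * R / real n)^2 * exp (8 * \<alpha>)^2"
  define K where "K = (1 + (\<alpha> - 1) * R powr (\<alpha> - 2) / 2 * P) / (R powr (2 * \<alpha> - 2) / 8) + P"
  have "A \<le> K * - B"
    unfolding K_def P_def
  proof (rule energy_estimate[OF a2 fh n R0 _ _ _ _ _ _ orth iF iH iFH])
    show "rho \<alpha> s \<le> exp (8 * \<alpha>) * rho \<alpha> t"
      if "j < n" "s \<in> cell (- R) (2 * R / real n) j" "t \<in> cell (- R) (2 * R / real n) j" for j s t
      by (rule rho_le_exp_mult_rho_cell[OF a1 R0 Rp that])
    show "W \<alpha> t \<ge> R powr (2 * \<alpha> - 2) / 8" if "\<bar>t\<bar> \<ge> R" for t
    proof (rule W_ge_outside[OF a2 R0 _ that])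
      have "4 * \<alpha> * 1 \<le> 4 * \<alpha> * real n" using a2 n by (intro mult_left_mono) auto
      thus "4 * (\<alpha> - 1) \<le> R powr \<alpha>" unfolding Rp by simp
    qed
  qed (use a2 R0 in \<open>auto intro: W_ge_inside\<close>)
  moreover have "K \<le> eigenvalue_constant \<alpha> / real n powr (2 * (\<alpha> - 1) / \<alpha>)"
    unfolding K_def P_def by (rule energy_constant_le[OF a2 n R0 Rp])
  moreover have "K > 0" using a2 R0 by (simp add: K_def P_def add_pos_nonneg)
  moreover have "0 \<le> f x^2 * rho \<alpha> x" for x using rho_pos[of \<alpha> x] by simp
  hence "A \<ge> 0" by (intro has_integral_nonneg[OF iF])
  ultimately have "0 \<le> K * - B" "A \<le> K * - B" "K > 0" "K \<le> eigenvalue_constant \<alpha> / real n powr (2 * (\<alpha> - 1) / \<alpha>)"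
    by linarith+
  moreover from this(1,3) have "0 \<le> - B" by (simp add: mult_le_0_iff)
  ultimately show ?thesis by (meson order_trans mult_right_mono)
qed

lemma integral_mu_eq_0_of_Zc_nonpos:
  fixes k :: "real \<Rightarrow> real"
  assumes "\<alpha> > 1" "\<not> Zc \<alpha> > 0" "k \<in> borel_measurable borel"
  shows "integral\<^sup>L (mu \<alpha>) k = 0"
proof -
  have "dens \<alpha> x = 0" for x using assms(2) by (simp add: dens_def divide_nonneg_nonpos)
  thus ?thesis using integral_mu[OF assms(1,3)] by simp
qed

lemma mu_energy_estimate:
  fixes n :: nat
  assumes a2: "\<alpha> > 2" and n: "n \<ge> 1" and fh: "(f, h) \<in> graphL \<alpha>"
    and orth: "\<And>j. j < n \<Longrightarrow>
      integral\<^sup>L (mu \<alpha>) (\<lambda>x. f x * indicator (cell (- ((4 * \<alpha> * n) powr (1 / \<alpha>))) (2 * (4 * \<alpha> * n) powr (1 / \<alpha>) / n) j) x) = 0"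
  shows "integral\<^sup>L (mu \<alpha>) (\<lambda>x. (f x)^2)
           \<le> eigenvalue_constant \<alpha> / real n powr (2 * (\<alpha> - 1) / \<alpha>) * integral\<^sup>L (mu \<alpha>) (\<lambda>x. f x * - h x)"
proof -
  have a1: "\<alpha> > 1" using a2 by simp
  define R where "R = (4 * \<alpha> * n) powr (1 / \<alpha>)"
  have R0: "R > 0" and Rp: "R powr \<alpha> = 4 * \<alpha> * real n" using a2 n by (auto simp: R_def powr_powr)
  have fL: "f \<in> L2 \<alpha>" and hL: "h \<in> L2 \<alpha>" using fh by (auto simp: graphL_def)
  hence fm: "f \<in> borel_measurable borel" and hm: "h \<in> borel_measurable borel"
    and fi: "integrable (mu \<alpha>) (\<lambda>x. (f x)^2)" and hi: "integrable (mu \<alpha>) (\<lambda>x. (h x)^2)"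
    by (auto simp: L2_def)
  show ?thesis
  proof (cases "Zc \<alpha> > 0")
    case False
    have "integral\<^sup>L (mu \<alpha>) (\<lambda>x. (f x)^2) = 0" "integral\<^sup>L (mu \<alpha>) (\<lambda>x. f x * - h x) = 0"
      using fm hm by (auto intro!: integral_mu_eq_0_of_Zc_nonpos[OF a1 False])
    thus ?thesis by simp
  next
    case Z: True
    define c where "c = eigenvalue_constant \<alpha> / real n powr (2 * (\<alpha> - 1) / \<alpha>)"
    have "Zc \<alpha> * integral\<^sup>L (mu \<alpha>) (\<lambda>x. (f x)^2) \<le> c * - (Zc \<alpha> * integral\<^sup>L (mu \<alpha>) (\<lambda>x. f x * h x))"
      unfolding c_def
    proof (rule energy_estimate_at_scale[OF a2 n fh R0 Rp])
      show "((\<lambda>t. f t * rho \<alpha> t) has_integral 0) (cell (- R) (2 * R / real n) j)" if "j < n" for j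
        using orth[OF that] unfolding R_def[symmetric] cell_def
        by (rule has_integral_cell_of_orthogonal_indicator[OF a1 Z fL])
      show "((\<lambda>x. (f x)^2 * rho \<alpha> x) has_integral Zc \<alpha> * integral\<^sup>L (mu \<alpha>) (\<lambda>x. (f x)^2)) UNIV"
        using fm fi by (intro has_integral_rho_mult_of_integrable_mu[OF a1 Z]) auto
      show "((\<lambda>x. (h x)^2 * rho \<alpha> x) has_integral Zc \<alpha> * integral\<^sup>L (mu \<alpha>) (\<lambda>x. (h x)^2)) UNIV"
        using hm hi by (intro has_integral_rho_mult_of_integrable_mu[OF a1 Z]) auto
      show "((\<lambda>x. f x * (h x * rho \<alpha> x)) has_integral Zc \<alpha> * integral\<^sup>L (mu \<alpha>) (\<lambda>x. f x * h x)) UNIV"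
        using has_integral_rho_mult_of_integrable_mu[OF a1 Z _ integrable_mu_mult_L2[OF a1 fL hL]] fm hm
        by (simp add: mult.assoc)
    qed
    hence "Zc \<alpha> * integral\<^sup>L (mu \<alpha>) (\<lambda>x. (f x)^2) \<le> Zc \<alpha> * (c * integral\<^sup>L (mu \<alpha>) (\<lambda>x. f x * - h x))"
      by (simp add: algebra_simps)
    thus ?thesis using Z unfolding c_def by (rule mult_left_le_imp_le)
  qed
qed

lemma lambdaL_ge_of_energy_estimate:
  assumes g: "\<And>i. i < n \<Longrightarrow> g i \<in> L2 \<alpha>" and K: "K > 0"
    and energy: "\<And>f h. (f, h) \<in> graphL \<alpha> \<Longrightarrow> (\<And>i. i < n \<Longrightarrow> integral\<^sup>L (mu \<alpha>) (\<lambda>x. f x * g i x) = 0) \<Longrightarrow>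
                   integral\<^sup>L (mu \<alpha>) (\<lambda>x. (f x)^2) \<le> K * integral\<^sup>L (mu \<alpha>) (\<lambda>x. f x * - h x)"
  shows "ereal (1 / K) \<le> lambdaL \<alpha> n"
proof -
  have "ereal (1 / K) \<le> ereal (integral\<^sup>L (mu \<alpha>) (\<lambda>x. f x * - h x) / integral\<^sup>L (mu \<alpha>) (\<lambda>x. (f x)^2))"
    if "(f, h) \<in> graphL \<alpha>" "integral\<^sup>L (mu \<alpha>) (\<lambda>x. (f x)^2) \<noteq> 0"
       "\<forall>i<n. integral\<^sup>L (mu \<alpha>) (\<lambda>x. f x * g i x) = 0" for f h
  proof -
    have "integral\<^sup>L (mu \<alpha>) (\<lambda>x. (f x)^2) > 0" using that(2) by (simp add: order_less_le)
    thus ?thesis using energy[OF that(1)] that(3) K by (simp add: field_simps)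
  qed
  hence "ereal (1 / K) \<le> (INF fh \<in> {(f, h). (f, h) \<in> graphL \<alpha> \<and> integral\<^sup>L (mu \<alpha>) (\<lambda>x. (f x)^2) \<noteq> 0 \<and>
                         (\<forall>i<n. integral\<^sup>L (mu \<alpha>) (\<lambda>x. f x * g i x) = 0)}.
          ereal (integral\<^sup>L (mu \<alpha>) (\<lambda>x. fst fh x * (- snd fh x)) / integral\<^sup>L (mu \<alpha>) (\<lambda>x. (fst fh x)^2)))"
    by (intro INF_greatest) auto
  also have "\<dots> \<le> lambdaL \<alpha> n"
    unfolding lambdaL_def by (rule SUP_upper) (use g in auto)
  finally show ?thesis .
qed

theorem mainTheorem11:
  fixes \<alpha> :: real
  assumes "\<alpha> > 2"
  shows "\<exists>C>0. \<forall>n::nat. n \<ge> 1 \<longrightarrow>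
           lambdaL \<alpha> n \<ge> ereal (C * real n powr (2 * (\<alpha> - 1) / \<alpha>))"
proof (intro exI[of _ "1 / eigenvalue_constant \<alpha>"] conjI allI impI)
  show "1 / eigenvalue_constant \<alpha> > 0" using eigenvalue_constant_pos[OF assms] by simp
  fix n :: nat assume n: "n \<ge> 1"
  define R where "R = (4 * \<alpha> * n) powr (1 / \<alpha>)"
  have "ereal (1 / (eigenvalue_constant \<alpha> / real n powr (2 * (\<alpha> - 1) / \<alpha>))) \<le> lambdaL \<alpha> n"
    using assms n eigenvalue_constant_pos[OF assms]
    by (intro lambdaL_ge_of_energy_estimate[where g = "\<lambda>j. indicator (cell (- R) (2 * R / n) j)"]
        mu_energy_estimate) (auto simp: cell_def R_def intro!: indicator_Icc_in_L2)
  thus "lambdaL \<alpha> n \<ge> ereal (1 / eigenvalue_constant \<alpha> * real n powr (2 * (\<alpha> - 1) / \<alpha>))" by simp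
qed

end
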